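(* Let $N,M\ge 1$, let $\varrho_0$ be a density operator on $\mathbb{C}^N\otimes\mathbb{C}^M$, let $p\in[0,1]$, let $\tau$ be any density operator on $\mathbb{C}^N\otimes\mathbb{C}^M$, and define the noise channel $D_p^\tau(\varrho):=p\,\tau\,\mathrm{Tr}(\varrho)+(1-p)\varrho$. For $x\in\{1,\ldots,N\}$ let $\widehat{O}_x$ be the oracle channel on $\mathcal{B}(\mathbb{C}^N\otimes\mathbb{C}^M)$ given by $\widehat{O}_x(|y\rangle\langle y'|\otimes\sigma)=(-1)^{\delta_{xy}+\delta_{xy'}}|y\rangle\langle y'|\otimes\sigma$. Let $k\ge1$ and let $T_1,T_1',\ldots,T_k,T_k'$ be arbitrary quantum channels (completely positive trace-preserving maps) on $\mathcal{B}(\mathbb{C}^N\otimes\mathbb{C}^M)$, not depending on $x$, and set $$\varrho_k^x=T_k'\widehat{O}_xT_kD_p^\tau\cdots D_p^\tau T_2'\widehat{O}_xT_2D_p^\tau T_1'\widehat{O}_xT_1D_p^\tau(\varrho_0).$$ Let $(E_y)_{y=1}^N$ be any POVM on $\mathbb{C}^N\otimes\mathbb{C}^M$. Then the average success probability $p_s:=\sum_{x=1}^N\frac1N\mathrm{Tr}[\varrho_k^xE_x]$ satisfies $$p_s\le\frac1N+\frac{8}{Np^2}\qquad\text{and}\qquad p_s\le 8\,\frac{k+1}{Np}.$$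
   Context: The $T_i,T_i'$ need not be unital. Composition of maps is written by juxtaposition. *)

theory Defs
  imports "Jordan_Normal_Form.Matrix"
begin

definition mtrace :: "complex mat \<Rightarrow> complex" where
  "mtrace A = (\<Sum>i<dim_row A. A $$ (i, i))"

text \<open>Matrices on C^N (x) C^M are complex (N*M)x(N*M) matrices; the basis vector
 |y> (x) |j> (0-based y < N, j < M) has index y*M + j (Kronecker convention).\<close>

definition psd :: "nat \<Rightarrow> complex mat \<Rightarrow> bool" where
  "psd n A \<longleftrightarrow> A \<in> carrier_mat n n \<and>
     (\<forall>v :: nat \<Rightarrow> complex.
        Im (\<Sum>i<n. \<Sum>j<n. cnj (v i) * A $$ (i, j) * v j) = 0 \<and>
        Re (\<Sum>i<n. \<Sum>j<n. cnj (v i) * A $$ (i, j) * v j) \<ge> 0)"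

definition density_op :: "nat \<Rightarrow> complex mat \<Rightarrow> bool" where
  "density_op n A \<longleftrightarrow> psd n A \<and> mtrace A = 1"

definition lin_map :: "nat \<Rightarrow> (complex mat \<Rightarrow> complex mat) \<Rightarrow> bool" where
  "lin_map d T \<longleftrightarrow>
     (\<forall>A \<in> carrier_mat d d. T A \<in> carrier_mat d d) \<and>
     (\<forall>A \<in> carrier_mat d d. \<forall>B \<in> carrier_mat d d. T (A + B) = T A + T B) \<and>
     (\<forall>A \<in> carrier_mat d d. \<forall>c. T (c \<cdot>\<^sub>m A) = c \<cdot>\<^sub>m T A)"

definition blk :: "nat \<Rightarrow> complex mat \<Rightarrow> nat \<Rightarrow> nat \<Rightarrow> complex mat" where
  "blk d X a b = mat d d (\<lambda>(i, j). X $$ (a * d + i, b * d + j))"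

definition ampl :: "nat \<Rightarrow> nat \<Rightarrow> (complex mat \<Rightarrow> complex mat) \<Rightarrow> complex mat \<Rightarrow> complex mat" where
  "ampl n d T X = mat (n * d) (n * d)
     (\<lambda>(r, c). T (blk d X (r div d) (c div d)) $$ (r mod d, c mod d))"

definition completely_positive :: "nat \<Rightarrow> (complex mat \<Rightarrow> complex mat) \<Rightarrow> bool" where
  "completely_positive d T \<longleftrightarrow>
     (\<forall>n X. psd (n * d) X \<longrightarrow> psd (n * d) (ampl n d T X))"

definition quantum_channel :: "nat \<Rightarrow> (complex mat \<Rightarrow> complex mat) \<Rightarrow> bool" where
  "quantum_channel d T \<longleftrightarrow> lin_map d T \<and> completely_positive d T \<and>
     (\<forall>A \<in> carrier_mat d d. mtrace (T A) = mtrace A)"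

definition noise :: "real \<Rightarrow> complex mat \<Rightarrow> complex mat \<Rightarrow> complex mat" where
  "noise p \<tau> \<rho> = (complex_of_real p * mtrace \<rho>) \<cdot>\<^sub>m \<tau> + complex_of_real (1 - p) \<cdot>\<^sub>m \<rho>"

text \<open>Query channel O_x (x 0-based, x < N): multiplies the entry
 (|y>|j>, |y'>|j'>) by (-1)^(delta_xy + delta_xy').\<close>
definition orcl :: "nat \<Rightarrow> nat \<Rightarrow> nat \<Rightarrow> complex mat \<Rightarrow> complex mat" where
  "orcl N M x A = mat (N * M) (N * M)
     (\<lambda>(r, c). (-1) ^ ((if r div M = x then 1 else 0) + (if c div M = x then 1 else 0)) * A $$ (r, c))"

fun state :: "nat \<Rightarrow> nat \<Rightarrow> real \<Rightarrow> complex mat \<Rightarrow> (nat \<Rightarrow> complex mat \<Rightarrow> complex mat)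
     \<Rightarrow> (nat \<Rightarrow> complex mat \<Rightarrow> complex mat) \<Rightarrow> complex mat \<Rightarrow> nat \<Rightarrow> nat \<Rightarrow> complex mat" where
  "state N M p \<tau> T T' \<rho>0 x 0 = \<rho>0"
| "state N M p \<tau> T T' \<rho>0 x (Suc i) =
     T' i (orcl N M x (T i (noise p \<tau> (state N M p \<tau> T T' \<rho>0 x i))))"

definition povm :: "nat \<Rightarrow> nat \<Rightarrow> (nat \<Rightarrow> complex mat) \<Rightarrow> bool" where
  "povm d K E \<longleftrightarrow> (\<forall>y<K. psd d (E y)) \<and> (\<forall>i<d. \<forall>j<d. (\<Sum>y<K. E y $$ (i, j)) = (if i = j then 1 else 0))"

end

theory Submission
  imports Defs
begin

text \<open>Every state of the algorithm is a sum \<open>\<Sum>s. v\<^sub>s v\<^sub>s\<^sup>*\<close> of branch vectors, one for each choice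
  of Kraus operators of the channels and of a Gram vector of the initial state. For a noiseless run of
  \<open>m\<close> queries, the hybrid argument of Bennett, Bernstein, Brassard and Vazirani compares the branches
  queried with oracle \<open>x\<close> with those in which the oracle is removed: each query moves them by at most
  twice the square root of the weight that the unqueried run puts on block \<open>x\<close>; these weights sum to
  one over \<open>x\<close>, and Cauchy-Schwarz gives \<open>\<Sum>x. Tr (\<rho>\<^sub>m\<^sup>x E\<^sub>x) \<le> (2m + 1)\<^sup>2\<close>.
  The noise channel is affine, so the noisy final state mixes, with weights \<open>p (1 - p)\<^sup>t\<close>, noiseless
  runs of \<open>t + 1\<close> queries started in \<open>\<tau>\<close>, and with weight \<open>(1 - p)\<^sup>k\<close> the noiseless run from
  \<open>\<rho>0\<close>. Summing the bounds gives \<open>1 + 8 \<Sum>t<k. (t + 1) (1 - p)\<^sup>t\<close>, which is at most \<open>1 + 8 / p\<^sup>2\<close>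
  and at most \<open>8 (k + 1) / p\<close>.\<close>

section \<open>Positive semidefinite forms and Gram decompositions\<close>

definition sform :: "'a set \<Rightarrow> ('a \<Rightarrow> 'a \<Rightarrow> complex) \<Rightarrow> ('a \<Rightarrow> complex) \<Rightarrow> ('a \<Rightarrow> complex) \<Rightarrow> complex" where
  "sform I B u v = (\<Sum>i\<in>I. \<Sum>j\<in>I. cnj (u i) * B i j * v j)"

definition psd_form :: "'a set \<Rightarrow> ('a \<Rightarrow> 'a \<Rightarrow> complex) \<Rightarrow> bool" where
  "psd_form I B \<longleftrightarrow> (\<forall>v. Im (sform I B v v) = 0 \<and> Re (sform I B v v) \<ge> 0)"

lemma psd_imp_psd_form: "psd n A \<Longrightarrow> psd_form {..<n} (\<lambda>i j. A $$ (i, j))"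
  unfolding psd_def psd_form_def sform_def by simp

lemma sform_add_scaled:
  "sform I B (\<lambda>i. u i + c * v i) (\<lambda>i. u i + c * v i) =
    sform I B u u + c * sform I B u v + cnj c * sform I B v u + cnj c * c * sform I B v v"
proof -
  have "cnj (u i + c * v i) * B i j * (u j + c * v j) =
     cnj (u i) * B i j * u j + c * (cnj (u i) * B i j * v j) + cnj c * (cnj (v i) * B i j * u j)
     + cnj c * c * (cnj (v i) * B i j * v j)" for i j
    by (simp add: algebra_simps)
  thus ?thesis unfolding sform_def by (simp add: sum.distrib sum_distrib_left)
qed

lemma psd_form_conj_sym:
  assumes "psd_form I B"
  shows "sform I B v u = cnj (sform I B u v)"
proof -
  have "Im (sform I B w w) = 0" for w using assms unfolding psd_form_def by blast
  from this[of "\<lambda>i. u i + 1 * v i"] this[of "\<lambda>i. u i + \<i> * v i"] this[of u] this[of v]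
  show ?thesis unfolding sform_add_scaled by (simp add: complex_eq_iff)
qed

lemma quadratic_nonneg_imp_le:
  fixes a b c :: real
  assumes quad: "\<And>t. 0 \<le> a - 2 * t * c + t\<^sup>2 * c * b" and "0 \<le> b"
  shows "c \<le> a * b"
proof (cases "b = 0")
  case True
  show ?thesis
  proof (rule ccontr)
    assume "\<not> c \<le> a * b"
    hence "c > 0" using True by simp
    thus False using quad[of "(a + 1) / (2 * c)"] True by simp
  qed
next
  case False
  hence "0 < b" using \<open>0 \<le> b\<close> by simp
  thus ?thesis using quad[of "1 / b"] by (simp add: field_simps power2_eq_square)
qed

lemma psd_form_Cauchy_Schwarz:
  assumes psd: "psd_form I B"
  shows "(cmod (sform I B u v))\<^sup>2 \<le> Re (sform I B u u) * Re (sform I B v v)"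
proof (rule quadratic_nonneg_imp_le)
  let ?\<alpha> = "sform I B u v"
  have norm: "cnj ?\<alpha> * ?\<alpha> = of_real ((cmod ?\<alpha>)\<^sup>2)"
    by (metis complex_norm_square mult.commute)
  fix t :: real
  let ?c = "- of_real t * cnj ?\<alpha>"
  have "0 \<le> Re (sform I B (\<lambda>i. u i + ?c * v i) (\<lambda>i. u i + ?c * v i))"
    using psd unfolding psd_form_def by blast
  also have "\<dots> = Re (sform I B u u) - 2 * t * (cmod ?\<alpha>)\<^sup>2 + t\<^sup>2 * (cmod ?\<alpha>)\<^sup>2 * Re (sform I B v v)"
  proof -
    have real: "Im (sform I B v v) = 0" using psd unfolding psd_form_def by blast
    have coeffs: "?c * ?\<alpha> = - of_real t * (cnj ?\<alpha> * ?\<alpha>)" "cnj ?c * cnj ?\<alpha> = - of_real t * (cnj ?\<alpha> * ?\<alpha>)"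
      "cnj ?c * ?c = of_real t * of_real t * (cnj ?\<alpha> * ?\<alpha>)"
      by (simp_all add: algebra_simps)
    show ?thesis using real
      unfolding sform_add_scaled psd_form_conj_sym[OF psd, of v u] coeffs norm by (simp add: power2_eq_square)
  qed
  finally show "0 \<le> Re (sform I B u u) - 2 * t * (cmod ?\<alpha>)\<^sup>2 + t\<^sup>2 * (cmod ?\<alpha>)\<^sup>2 * Re (sform I B v v)" .
next
  show "0 \<le> Re (sform I B v v)" using assms unfolding psd_form_def by blast
qed

lemma psd_form_triangle:
  assumes psd: "psd_form I B"
  shows "sqrt (Re (sform I B (\<lambda>i. u i + v i) (\<lambda>i. u i + v i)))
     \<le> sqrt (Re (sform I B u u)) + sqrt (Re (sform I B v v))"
proof -
  let ?a = "Re (sform I B u u)" and ?b = "Re (sform I B v v)" and ?\<alpha> = "sform I B u v"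
  have a0: "?a \<ge> 0" and b0: "?b \<ge> 0" using psd unfolding psd_form_def by auto
  have "Re (sform I B (\<lambda>i. u i + v i) (\<lambda>i. u i + v i)) = ?a + 2 * Re ?\<alpha> + ?b"
    using sform_add_scaled[of I B u 1 v] unfolding psd_form_conj_sym[OF psd, of v u] by simp
  also have "Re ?\<alpha> \<le> sqrt ?a * sqrt ?b"
  proof -
    have "(cmod ?\<alpha>)\<^sup>2 \<le> (sqrt ?a * sqrt ?b)\<^sup>2"
      using psd_form_Cauchy_Schwarz[OF psd, of u v] a0 b0 by (simp add: power_mult_distrib)
    hence "cmod ?\<alpha> \<le> sqrt ?a * sqrt ?b" by (rule power2_le_imp_le) (simp add: a0 b0)
    thus ?thesis using complex_Re_le_cmod order_trans by blast
  qed
  hence "?a + 2 * Re ?\<alpha> + ?b \<le> (sqrt ?a + sqrt ?b)\<^sup>2"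
    using a0 b0 by (simp add: power2_sum)
  finally show ?thesis using a0 b0 by (simp add: real_le_lsqrt)
qed

definition basis_fun :: "'a \<Rightarrow> 'a \<Rightarrow> complex" where
  "basis_fun m = (\<lambda>i. if i = m then 1 else 0)"

lemma sform_basis_right:
  "finite I \<Longrightarrow> m \<in> I \<Longrightarrow> sform I B v (basis_fun m) = (\<Sum>i\<in>I. cnj (v i) * B i m)"
  unfolding sform_def basis_fun_def by (simp add: if_distrib cong: if_cong)

lemma sform_basis_left:
  assumes "finite I" "m \<in> I"
  shows "sform I B (basis_fun m) v = (\<Sum>j\<in>I. B m j * v j)"
proof -
  have "(\<Sum>j\<in>I. cnj (basis_fun m i) * B i j * v j) = (if i = m then (\<Sum>j\<in>I. B m j * v j) else 0)" for i
    by (simp add: basis_fun_def)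
  thus ?thesis unfolding sform_def using assms by simp
qed

lemma sform_basis_basis:
  "finite I \<Longrightarrow> a \<in> I \<Longrightarrow> b \<in> I \<Longrightarrow> sform I B (basis_fun a) (basis_fun b) = B a b"
  by (simp add: sform_basis_left) (simp add: basis_fun_def if_distrib cong: if_cong)

lemma psd_form_hermitian:
  assumes "psd_form I B" "finite I" "a \<in> I" "b \<in> I"
  shows "B a b = cnj (B b a)"
  using psd_form_conj_sym[OF assms(1), of "basis_fun a" "basis_fun b"]
  by (simp add: sform_basis_basis assms)

lemma psd_form_diag:
  assumes "psd_form I B" "finite I" "a \<in> I"
  shows "B a a = of_real (Re (B a a))" "Re (B a a) \<ge> 0"
proof -
  have "Im (B a a) = 0 \<and> 0 \<le> Re (B a a)"
    using assms(1) sform_basis_basis[OF assms(2,3,3), of B] unfolding psd_form_def by metis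
  thus "B a a = of_real (Re (B a a))" "Re (B a a) \<ge> 0" by (simp_all add: complex_eq_iff)
qed

lemma psd_form_zero_diag_imp_zero:
  assumes psd: "psd_form I C" and fin: "finite I" and "i \<in> I" "m \<in> I" and "C m m = 0"
  shows "C i m = 0" "C m i = 0"
proof -
  have "(cmod (C i m))\<^sup>2 \<le> Re (C i i) * Re (C m m)"
    using psd_form_Cauchy_Schwarz[OF psd, of "basis_fun i" "basis_fun m"] assms
    by (simp add: sform_basis_basis)
  thus "C i m = 0" using \<open>C m m = 0\<close> by simp
  thus "C m i = 0" using psd_form_hermitian[OF psd fin \<open>m \<in> I\<close> \<open>i \<in> I\<close>] by simp
qed

lemma sform_sub_rank_one:
  "sform I (\<lambda>i j. C i j - w i * cnj (w j)) v v =
     sform I C v v - (\<Sum>i\<in>I. cnj (v i) * w i) * cnj (\<Sum>i\<in>I. cnj (v i) * w i)"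
proof -
  have "sform I (\<lambda>i j. C i j - w i * cnj (w j)) v v =
      sform I C v v - (\<Sum>i\<in>I. \<Sum>j\<in>I. (cnj (v i) * w i) * (cnj (w j) * v j))"
    unfolding sform_def by (simp add: algebra_simps sum_subtractf)
  also have "(\<Sum>i\<in>I. \<Sum>j\<in>I. (cnj (v i) * w i) * (cnj (w j) * v j)) =
      (\<Sum>i\<in>I. cnj (v i) * w i) * (\<Sum>j\<in>I. cnj (w j) * v j)"
    by (simp add: sum_product)
  also have "(\<Sum>j\<in>I. cnj (w j) * v j) = cnj (\<Sum>i\<in>I. cnj (v i) * w i)"
    by (simp add: mult.commute)
  finally show ?thesis .
qed

text \<open>One step of Cholesky elimination: split off the rank-one part through the pivot \<open>m\<close>.\<close>
lemma psd_form_pivot_split: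
  assumes psd: "psd_form I C" and fin: "finite I" and m: "m \<in> I"
  obtains w C' where "psd_form I C'" "\<And>i j. C i j = w i * cnj (w j) + C' i j"
    "\<And>i. i \<in> I \<Longrightarrow> C' i m = 0 \<and> C' m i = 0" "\<And>i. C i m = 0 \<Longrightarrow> w i = 0"
proof (cases "Re (C m m) = 0")
  case True
  hence "C m m = 0" using psd_form_diag(1)[OF psd fin m] by simp
  thus ?thesis using psd_form_zero_diag_imp_zero[OF psd fin _ m] that[of C "\<lambda>_. 0"] psd by auto
next
  case False
  define b where "b = Re (C m m)"
  have Cmm: "C m m = of_real b" using psd_form_diag(1)[OF psd fin m] unfolding b_def .
  have b: "b > 0" using psd_form_diag(2)[OF psd fin m] False unfolding b_def by simp
  define w where "w i = C i m / of_real (sqrt b)" for i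
  define C' where "C' i j = C i j - w i * cnj (w j)" for i j
  have ww: "w i * cnj (w j) = C i m * cnj (C j m) / of_real b" for i j
    unfolding w_def using b by (simp flip: of_real_mult)
  have "psd_form I C'"
    unfolding psd_form_def
  proof
    fix v
    let ?\<beta> = "sform I C v (basis_fun m)"
    have "(\<Sum>i\<in>I. cnj (v i) * w i) = ?\<beta> / of_real (sqrt b)"
      unfolding w_def sform_basis_right[OF fin m] by (simp add: sum_divide_distrib)
    hence g: "(\<Sum>i\<in>I. cnj (v i) * w i) * cnj (\<Sum>i\<in>I. cnj (v i) * w i) = of_real ((cmod ?\<beta>)\<^sup>2 / b)"
      using b complex_norm_square[of ?\<beta>] by (simp flip: of_real_mult)
    have "(cmod ?\<beta>)\<^sup>2 \<le> Re (sform I C v v) * b"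
      using psd_form_Cauchy_Schwarz[OF psd, of v "basis_fun m"] sform_basis_basis[OF fin m m, of C]
      unfolding b_def by simp
    thus "Im (sform I C' v v) = 0 \<and> 0 \<le> Re (sform I C' v v)"
      unfolding C'_def[abs_def] sform_sub_rank_one g using psd b unfolding psd_form_def
      by (simp add: pos_divide_le_eq)
  qed
  moreover have "C' i m = 0 \<and> C' m i = 0" if "i \<in> I" for i
    using psd_form_hermitian[OF psd fin that m] b unfolding C'_def ww Cmm by simp
  ultimately show ?thesis using that[of C' w] unfolding C'_def w_def by auto
qed

lemma psd_form_partial_gram:
  fixes n m :: nat
  assumes psd: "psd_form {..<n} B"
  shows "m \<le> n \<Longrightarrow> \<exists>w C. psd_form {..<n} C \<and> (\<forall>i<n. \<forall>j<n. i < m \<or> j < m \<longrightarrow> C i j = 0) \<and>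
     (\<forall>i<n. \<forall>j<n. B i j = (\<Sum>l<m. w l i * cnj (w l j)) + C i j)"
proof (induction m)
  case 0
  show ?case using psd by (intro exI[of _ "\<lambda>_ _. 0"] exI[of _ B]) auto
next
  case (Suc m)
  then obtain w C where C: "psd_form {..<n} C" "\<forall>i<n. \<forall>j<n. i < m \<or> j < m \<longrightarrow> C i j = 0"
    "\<forall>i<n. \<forall>j<n. B i j = (\<Sum>l<m. w l i * cnj (w l j)) + C i j" by auto
  obtain u C' where C': "psd_form {..<n} C'" "\<And>i j. C i j = u i * cnj (u j) + C' i j"
    "\<And>i. i < n \<Longrightarrow> C' i m = 0 \<and> C' m i = 0" "\<And>i. C i m = 0 \<Longrightarrow> u i = 0"
    using psd_form_pivot_split[OF C(1) finite_lessThan, of m] Suc.prems by (metis lessThan_iff Suc_le_lessD)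
  have "C' i j = 0" if ij: "i < n" "j < n" "i < Suc m \<or> j < Suc m" for i j
  proof -
    consider "i < m" | "j < m" | "i = m" | "j = m" using ij(3) by linarith
    thus ?thesis
    proof cases
      case 1 thus ?thesis using C(2) C'(2)[of i j] C'(4)[of i] ij Suc.prems by simp
    next
      case 2 thus ?thesis using C(2) C'(2)[of i j] C'(4)[of j] ij Suc.prems by simp
    qed (use C'(3) ij in auto)
  qed
  moreover have "B i j = (\<Sum>l<Suc m. (w(m := u)) l i * cnj ((w(m := u)) l j)) + C' i j"
    if "i < n" "j < n" for i j
    using C(3) C'(2) that by simp
  ultimately show ?case using C'(1) by blast
qed

lemma psd_form_gram:
  fixes n :: nat
  assumes "psd_form {..<n} B"
  obtains w where "\<And>i j. i < n \<Longrightarrow> j < n \<Longrightarrow> B i j = (\<Sum>l<n. w l i * cnj (w l j))"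
  using psd_form_partial_gram[OF assms, of n] by fastforce

section \<open>Kraus representation of quantum channels\<close>

definition mat_unit :: "nat \<Rightarrow> nat \<Rightarrow> nat \<Rightarrow> complex mat" where
  "mat_unit d a b = mat d d (\<lambda>(i, j). if i = a \<and> j = b then 1 else 0)"

definition mat_restrict :: "nat \<Rightarrow> complex mat \<Rightarrow> (nat \<times> nat) set \<Rightarrow> complex mat" where
  "mat_restrict d A P = mat d d (\<lambda>(a, b). if (a, b) \<in> P then A $$ (a, b) else 0)"

lemma mat_unit_carrier [simp]: "mat_unit d a b \<in> carrier_mat d d"
  unfolding mat_unit_def by simp

lemma lin_map_zero:
  assumes lin: "lin_map d T"
  shows "T (0\<^sub>m d d) = 0\<^sub>m d d"
proof -
  have z: "0\<^sub>m d d \<in> carrier_mat d d" by simp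
  have "T (0\<^sub>m d d) = T ((0::complex) \<cdot>\<^sub>m 0\<^sub>m d d)" by simp
  also have "\<dots> = 0 \<cdot>\<^sub>m T (0\<^sub>m d d)" using lin z unfolding lin_map_def by blast
  also have "\<dots> = 0\<^sub>m d d"
  proof -
    have "T (0\<^sub>m d d) \<in> carrier_mat d d" using lin z unfolding lin_map_def by blast
    thus ?thesis by (intro eq_matI) auto
  qed
  finally show ?thesis .
qed

lemma lin_map_restrict_entry:
  assumes lin: "lin_map d T" and "finite P" "P \<subseteq> {..<d} \<times> {..<d}" and ij: "i < d" "j < d"
  shows "T (mat_restrict d A P) $$ (i, j) = (\<Sum>(a, b)\<in>P. A $$ (a, b) * T (mat_unit d a b) $$ (i, j))"
  using assms(2,3)
proof (induction P rule: finite_induct)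
  case empty
  have "mat_restrict d A {} = 0\<^sub>m d d" unfolding mat_restrict_def by (intro eq_matI) auto
  thus ?case using lin_map_zero[OF lin] ij by simp
next
  case (insert p P)
  obtain a b where p: "p = (a, b)" by (cases p)
  have "mat_restrict d A (insert p P) = mat_restrict d A P + A $$ (a, b) \<cdot>\<^sub>m mat_unit d a b"
    unfolding mat_restrict_def mat_unit_def p using insert.hyps(2) p by (intro eq_matI) auto
  moreover have "mat_restrict d A P \<in> carrier_mat d d" unfolding mat_restrict_def by simp
  ultimately have "T (mat_restrict d A (insert p P)) = T (mat_restrict d A P) + A $$ (a, b) \<cdot>\<^sub>m T (mat_unit d a b)"
    using lin unfolding lin_map_def by (simp add: smult_carrier_mat)
  moreover have "T (mat_restrict d A P) \<in> carrier_mat d d" "T (mat_unit d a b) \<in> carrier_mat d d"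
    using lin unfolding lin_map_def mat_restrict_def by auto
  ultimately show ?case using insert p ij by simp
qed

lemma lin_map_entry_expansion:
  assumes lin: "lin_map d T" and A: "A \<in> carrier_mat d d" and ij: "i < d" "j < d"
  shows "T A $$ (i, j) = (\<Sum>a<d. \<Sum>b<d. A $$ (a, b) * T (mat_unit d a b) $$ (i, j))"
proof -
  have "mat_restrict d A ({..<d} \<times> {..<d}) = A" unfolding mat_restrict_def using A by (intro eq_matI) auto
  thus ?thesis using lin_map_restrict_entry[OF lin _ _ ij, of "{..<d} \<times> {..<d}" A]
    by (simp add: sum.cartesian_product)
qed

text \<open>With the index convention \<open>a * d + i\<close>, this is \<open>\<Sum>a b. |a a\<rangle>\<langle>b b|\<close>, so \<open>ampl d d T\<close> maps it to
  the Choi matrix of \<open>T\<close>; the Gram vectors of the latter are the Kraus operators.\<close>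
definition choi_matrix :: "nat \<Rightarrow> complex mat" where
  "choi_matrix d = mat (d * d) (d * d) (\<lambda>(r, c). if r mod d = r div d \<and> c mod d = c div d then 1 else 0)"

lemma psd_choi_matrix: "psd (d * d) (choi_matrix d)"
  unfolding psd_def
proof (intro conjI allI)
  show "choi_matrix d \<in> carrier_mat (d * d) (d * d)" unfolding choi_matrix_def by simp
  fix v :: "nat \<Rightarrow> complex"
  define u where "u r = (if r mod d = r div d then v r else 0)" for r
  define S where "S = (\<Sum>r<d*d. u r)"
  have "(\<Sum>i<d * d. \<Sum>j<d * d. cnj (v i) * choi_matrix d $$ (i, j) * v j) =
      (\<Sum>i<d * d. \<Sum>j<d * d. cnj (u i) * u j)"
    unfolding choi_matrix_def u_def by (intro sum.cong refl) auto
  also have "\<dots> = cnj S * S" by (simp only: S_def cnj_sum sum_product)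
  also have "\<dots> = of_real ((cmod S)\<^sup>2)" by (metis complex_norm_square mult.commute)
  finally have e: "(\<Sum>i<d * d. \<Sum>j<d * d. cnj (v i) * choi_matrix d $$ (i, j) * v j) = of_real ((cmod S)\<^sup>2)" .
  show "Im (\<Sum>i<d * d. \<Sum>j<d * d. cnj (v i) * choi_matrix d $$ (i, j) * v j) = 0"
    "0 \<le> Re (\<Sum>i<d * d. \<Sum>j<d * d. cnj (v i) * choi_matrix d $$ (i, j) * v j)"
    unfolding e by simp_all
qed

lemma block_index_less: "a < d \<Longrightarrow> i < d \<Longrightarrow> a * d + i < d * (d::nat)"
  by (metis Suc_leI add_less_mono1 mult_Suc mult_le_mono1 order_less_le_trans add.commute mult.commute)

lemma ampl_choi_matrix_entry:
  assumes "a < d" "b < d" "i < d" "j < d"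
  shows "ampl d d T (choi_matrix d) $$ (a * d + i, b * d + j) = T (mat_unit d a b) $$ (i, j)"
proof -
  have "blk d (choi_matrix d) a b = mat_unit d a b"
    unfolding blk_def choi_matrix_def mat_unit_def using assms block_index_less
    by (intro eq_matI) auto
  thus ?thesis unfolding ampl_def using assms block_index_less by simp
qed

text \<open>\<open>K l\<close> (for \<open>l < d * d\<close>) is the \<open>l\<close>-th Kraus operator, with entries \<open>K l i a\<close>.\<close>
definition kraus_rep :: "nat \<Rightarrow> (complex mat \<Rightarrow> complex mat) \<Rightarrow> (nat \<Rightarrow> nat \<Rightarrow> nat \<Rightarrow> complex) \<Rightarrow> bool" where
  "kraus_rep d T K \<longleftrightarrow> (\<forall>A\<in>carrier_mat d d. T A \<in> carrier_mat d d \<and> (\<forall>i<d. \<forall>j<d.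
     T A $$ (i, j) = (\<Sum>l<d*d. \<Sum>a<d. \<Sum>b<d. K l i a * A $$ (a, b) * cnj (K l j b))))"

definition kraus_isometry :: "nat \<Rightarrow> (nat \<Rightarrow> nat \<Rightarrow> nat \<Rightarrow> complex) \<Rightarrow> bool" where
  "kraus_isometry d K \<longleftrightarrow>
     (\<forall>a<d. \<forall>b<d. (\<Sum>l<d*d. \<Sum>i<d. cnj (K l i a) * K l i b) = (if a = b then 1 else 0))"

lemma completely_positive_kraus_rep:
  assumes lin: "lin_map d T" and cp: "completely_positive d T"
  obtains K where "kraus_rep d T K"
    "\<And>a b i j. a < d \<Longrightarrow> b < d \<Longrightarrow> i < d \<Longrightarrow> j < d \<Longrightarrow>
       T (mat_unit d a b) $$ (i, j) = (\<Sum>l<d*d. K l i a * cnj (K l j b))"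
proof -
  have "psd (d * d) (ampl d d T (choi_matrix d))"
    using cp psd_choi_matrix unfolding completely_positive_def by blast
  then obtain w where w: "\<And>r c. r < d * d \<Longrightarrow> c < d * d \<Longrightarrow>
      ampl d d T (choi_matrix d) $$ (r, c) = (\<Sum>l<d*d. w l r * cnj (w l c))"
    by (rule psd_form_gram[OF psd_imp_psd_form]) blast
  define K where "K l i a = w l (a * d + i)" for l i a
  have unit: "T (mat_unit d a b) $$ (i, j) = (\<Sum>l<d*d. K l i a * cnj (K l j b))"
    if "a < d" "b < d" "i < d" "j < d" for a b i j
    using ampl_choi_matrix_entry[OF that, of T] w block_index_less that unfolding K_def by simp
  have "T A $$ (i, j) = (\<Sum>l<d*d. \<Sum>a<d. \<Sum>b<d. K l i a * A $$ (a, b) * cnj (K l j b))"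
    if A: "A \<in> carrier_mat d d" and ij: "i < d" "j < d" for A i j
  proof -
    have "T A $$ (i, j) = (\<Sum>a<d. \<Sum>b<d. \<Sum>l<d*d. K l i a * A $$ (a, b) * cnj (K l j b))"
      unfolding lin_map_entry_expansion[OF lin A ij]
      by (intro sum.cong refl) (simp add: unit ij sum_distrib_left algebra_simps)
    also have "\<dots> = (\<Sum>a<d. \<Sum>l<d*d. \<Sum>b<d. K l i a * A $$ (a, b) * cnj (K l j b))"
      by (intro sum.cong refl sum.swap)
    also have "\<dots> = (\<Sum>l<d*d. \<Sum>a<d. \<Sum>b<d. K l i a * A $$ (a, b) * cnj (K l j b))"
      by (rule sum.swap)
    finally show ?thesis .
  qed
  hence "kraus_rep d T K" using lin unfolding kraus_rep_def lin_map_def by blast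
  thus ?thesis using that unit by blast
qed

lemma trace_preserving_kraus_isometry:
  assumes lin: "lin_map d T" and tp: "\<forall>A\<in>carrier_mat d d. mtrace (T A) = mtrace A"
    and unit: "\<And>a b i j. a < d \<Longrightarrow> b < d \<Longrightarrow> i < d \<Longrightarrow> j < d \<Longrightarrow>
       T (mat_unit d a b) $$ (i, j) = (\<Sum>l<d*d. K l i a * cnj (K l j b))"
  shows "kraus_isometry d K"
  unfolding kraus_isometry_def
proof (intro allI impI)
  fix a b assume ab: "a < d" "b < d"
  have "T (mat_unit d b a) \<in> carrier_mat d d" using lin unfolding lin_map_def by simp
  hence "mtrace (T (mat_unit d b a)) = (\<Sum>i<d. \<Sum>l<d*d. K l i b * cnj (K l i a))"
    unfolding mtrace_def using ab by (simp add: unit)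
  also have "\<dots> = (\<Sum>l<d*d. \<Sum>i<d. cnj (K l i a) * K l i b)"
    by (subst sum.swap) (simp add: mult.commute)
  finally have "(\<Sum>l<d*d. \<Sum>i<d. cnj (K l i a) * K l i b) = mtrace (T (mat_unit d b a))" ..
  also have "\<dots> = mtrace (mat_unit d b a)" using tp by simp
  also have "\<dots> = (if a = b then 1 else 0)"
    using ab unfolding mtrace_def mat_unit_def by (cases "a = b") (auto intro: sum.neutral)
  finally show "(\<Sum>l<d*d. \<Sum>i<d. cnj (K l i a) * K l i b) = (if a = b then 1 else 0)" .
qed

lemma quantum_channel_kraus:
  assumes "quantum_channel d T"
  obtains K where "kraus_rep d T K" "kraus_isometry d K"
proof -
  have lin: "lin_map d T" and cp: "completely_positive d T"
    and tp: "\<forall>A\<in>carrier_mat d d. mtrace (T A) = mtrace A"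
    using assms unfolding quantum_channel_def by auto
  obtain K where K: "kraus_rep d T K" and unit: "\<And>a b i j. a < d \<Longrightarrow> b < d \<Longrightarrow> i < d \<Longrightarrow> j < d \<Longrightarrow>
       T (mat_unit d a b) $$ (i, j) = (\<Sum>l<d*d. K l i a * cnj (K l j b))"
    by (rule completely_positive_kraus_rep[OF lin cp]) auto
  show ?thesis by (rule that[OF K trace_preserving_kraus_isometry[OF lin tp unit]])
qed

definition op_apply :: "nat \<Rightarrow> (nat \<Rightarrow> nat \<Rightarrow> complex) \<Rightarrow> (nat \<Rightarrow> complex) \<Rightarrow> nat \<Rightarrow> complex" where
  "op_apply d K v = (\<lambda>i. \<Sum>a<d. K i a * v a)"

definition sq_norm :: "nat \<Rightarrow> (nat \<Rightarrow> complex) \<Rightarrow> real" where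
  "sq_norm d v = (\<Sum>i<d. (cmod (v i))\<^sup>2)"

lemma sq_norm_nonneg: "0 \<le> sq_norm d v"
  unfolding sq_norm_def by (simp add: sum_nonneg)

lemma of_real_sq_norm: "of_real (sq_norm d v) = (\<Sum>i<d. cnj (v i) * v i)"
  unfolding sq_norm_def of_real_sum by (intro sum.cong refl) (metis complex_norm_square mult.commute)

lemma op_apply_add: "op_apply d K (\<lambda>i. u i + v i) = (\<lambda>i. op_apply d K u i + op_apply d K v i)"
  unfolding op_apply_def by (simp add: sum.distrib algebra_simps)

lemma op_apply_diff: "op_apply d K (\<lambda>i. u i - v i) = (\<lambda>i. op_apply d K u i - op_apply d K v i)"
  unfolding op_apply_def by (simp add: sum_subtractf algebra_simps)

lemma sum_swap_2_2:
  "(\<Sum>l\<in>A. \<Sum>i\<in>B. \<Sum>a\<in>C. \<Sum>b\<in>D. g l i a b) = (\<Sum>a\<in>C. \<Sum>b\<in>D. \<Sum>l\<in>A. \<Sum>i\<in>B. g l i a b)"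
proof -
  have "(\<Sum>l\<in>A. \<Sum>i\<in>B. \<Sum>a\<in>C. \<Sum>b\<in>D. g l i a b) = (\<Sum>l\<in>A. \<Sum>a\<in>C. \<Sum>i\<in>B. \<Sum>b\<in>D. g l i a b)"
    by (intro sum.cong refl sum.swap)
  also have "\<dots> = (\<Sum>l\<in>A. \<Sum>a\<in>C. \<Sum>b\<in>D. \<Sum>i\<in>B. g l i a b)"
    by (intro sum.cong refl sum.swap)
  also have "\<dots> = (\<Sum>a\<in>C. \<Sum>l\<in>A. \<Sum>b\<in>D. \<Sum>i\<in>B. g l i a b)"
    by (rule sum.swap)
  also have "\<dots> = (\<Sum>a\<in>C. \<Sum>b\<in>D. \<Sum>l\<in>A. \<Sum>i\<in>B. g l i a b)"
    by (intro sum.cong refl sum.swap)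
  finally show ?thesis .
qed

lemma cnj_sum_mult_sum:
  "cnj (\<Sum>a\<in>A. k a * v a) * (\<Sum>b\<in>A. k b * v b) = (\<Sum>a\<in>A. \<Sum>b\<in>A. (cnj (v a) * v b) * (cnj (k a) * k b))"
proof -
  have "cnj (\<Sum>a\<in>A. k a * v a) * (\<Sum>b\<in>A. k b * v b) = (\<Sum>a\<in>A. \<Sum>b\<in>A. cnj (k a * v a) * (k b * v b))"
    unfolding cnj_sum sum_product ..
  thus ?thesis by (simp add: mult.commute mult.left_commute)
qed

lemma kraus_isometry_sq_norm:
  assumes "kraus_isometry d K"
  shows "(\<Sum>l<d*d. sq_norm d (op_apply d (K l) v)) = sq_norm d v"
proof -
  have "of_real (\<Sum>l<d*d. sq_norm d (op_apply d (K l) v)) =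
      (\<Sum>l<d*d. \<Sum>i<d. \<Sum>a<d. \<Sum>b<d. (cnj (v a) * v b) * (cnj (K l i a) * K l i b))"
    unfolding of_real_sum of_real_sq_norm op_apply_def by (intro sum.cong refl) (rule cnj_sum_mult_sum)
  also have "\<dots> = (\<Sum>a<d. \<Sum>b<d. (cnj (v a) * v b) * (\<Sum>l<d*d. \<Sum>i<d. cnj (K l i a) * K l i b))"
    unfolding sum_distrib_left by (rule sum_swap_2_2)
  also have "\<dots> = (\<Sum>a<d. \<Sum>b<d. (cnj (v a) * v b) * (if a = b then 1 else 0))"
    using assms unfolding kraus_isometry_def by (intro sum.cong refl) simp
  also have "\<dots> = of_real (sq_norm d v)"
    unfolding of_real_sq_norm by (simp add: if_distrib cong: if_cong)
  finally show ?thesis by (simp only: of_real_eq_iff)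
qed

definition oracle_sign :: "nat \<Rightarrow> nat \<Rightarrow> nat \<Rightarrow> complex" where
  "oracle_sign M x i = (if i div M = x then -1 else 1)"

text \<open>\<open>None\<close> removes the oracle; it yields the unqueried run of the hybrid argument.\<close>
definition oracle_vec :: "nat \<Rightarrow> nat option \<Rightarrow> (nat \<Rightarrow> complex) \<Rightarrow> nat \<Rightarrow> complex" where
  "oracle_vec M ob v = (case ob of None \<Rightarrow> v | Some x \<Rightarrow> (\<lambda>i. oracle_sign M x i * v i))"

definition block_mass :: "nat \<Rightarrow> nat \<Rightarrow> nat \<Rightarrow> (nat \<Rightarrow> complex) \<Rightarrow> real" where
  "block_mass d M x v = (\<Sum>i<d. if i div M = x then (cmod (v i))\<^sup>2 else 0)"

lemma cmod_oracle_sign [simp]: "cmod (oracle_sign M x i) = 1"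
  unfolding oracle_sign_def by simp

lemma sq_norm_oracle_vec: "sq_norm d (oracle_vec M ob v) = sq_norm d v"
  unfolding sq_norm_def oracle_vec_def by (cases ob) (simp_all add: norm_mult)

lemma sq_norm_oracle_flip: "sq_norm d (\<lambda>i. oracle_sign M x i * v i - v i) = 4 * block_mass d M x v"
  unfolding sq_norm_def block_mass_def oracle_sign_def sum_distrib_left
  by (intro sum.cong refl) (simp add: norm_mult power2_eq_square)

lemma block_mass_nonneg: "0 \<le> block_mass d M x v"
  unfolding block_mass_def by (simp add: sum_nonneg)

lemma sum_block_mass:
  assumes "d = N * M"
  shows "(\<Sum>x<N. block_mass d M x v) = sq_norm d v"
proof -
  have "(\<Sum>x<N. block_mass d M x v) = (\<Sum>i<d. \<Sum>x<N. if i div M = x then (cmod (v i))\<^sup>2 else 0)"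
    unfolding block_mass_def by (rule sum.swap)
  also have "\<dots> = sq_norm d v"
    unfolding sq_norm_def
  proof (intro sum.cong refl)
    fix i assume "i \<in> {..<d}"
    hence "i div M < N" using assms by (simp add: less_mult_imp_div_less)
    thus "(\<Sum>x<N. if i div M = x then (cmod (v i))\<^sup>2 else 0) = (cmod (v i))\<^sup>2" by simp
  qed
  finally show ?thesis .
qed

definition form_sum :: "'s set \<Rightarrow> nat \<Rightarrow> (nat \<Rightarrow> nat \<Rightarrow> complex) \<Rightarrow> ('s \<Rightarrow> nat \<Rightarrow> complex)
    \<Rightarrow> ('s \<Rightarrow> nat \<Rightarrow> complex) \<Rightarrow> complex" where
  "form_sum S d E G H = (\<Sum>s\<in>S. sform {..<d} E (G s) (H s))"

definition block_diag :: "(nat \<Rightarrow> nat \<Rightarrow> complex) \<Rightarrow> 's \<times> nat \<Rightarrow> 's \<times> nat \<Rightarrow> complex" where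
  "block_diag E = (\<lambda>(s, i) (s', j). if s = s' then E i j else 0)"

lemma form_sum_eq_sform_block_diag:
  fixes S :: "'s set"
  assumes "finite S"
  shows "form_sum S d E G H = sform (S \<times> {..<d}) (block_diag E) (\<lambda>(s, i). G s i) (\<lambda>(s, i). H s i)"
proof -
  have inner: "(\<Sum>s'\<in>S. \<Sum>j<d. block_diag E (s, i) (s', j) * H s' j) = (\<Sum>j<d. E i j * H s j)"
    if "s \<in> S" for s i
  proof -
    have "(\<Sum>s'\<in>S. \<Sum>j<d. block_diag E (s, i) (s', j) * H s' j) =
        (\<Sum>s'\<in>S. if s' = s then (\<Sum>j<d. E i j * H s j) else 0)"
      unfolding block_diag_def by (intro sum.cong refl) auto
    thus ?thesis using that assms by simp
  qed
  have "sform (S \<times> {..<d}) (block_diag E) (\<lambda>(s, i). G s i) (\<lambda>(s, i). H s i) =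
      (\<Sum>s\<in>S. \<Sum>i<d. cnj (G s i) * (\<Sum>s'\<in>S. \<Sum>j<d. block_diag E (s, i) (s', j) * H s' j))"
    unfolding sform_def by (simp add: sum.cartesian_product' sum_distrib_left mult.assoc)
  also have "\<dots> = form_sum S d E G H"
    unfolding form_sum_def sform_def by (simp add: inner sum_distrib_left mult.assoc)
  finally show ?thesis ..
qed

lemma form_sum_nonneg:
  assumes "psd_form {..<d} E"
  shows "Im (form_sum S d E G G) = 0" "0 \<le> Re (form_sum S d E G G)"
  using assms unfolding form_sum_def psd_form_def by (simp_all add: Im_sum Re_sum sum_nonneg)

lemma psd_form_block_diag:
  fixes S :: "'s set"
  assumes "finite S" "psd_form {..<d} E"
  shows "psd_form (S \<times> {..<d}) (block_diag E)"
  unfolding psd_form_def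
proof
  fix v :: "'s \<times> nat \<Rightarrow> complex"
  have "sform (S \<times> {..<d}) (block_diag E) v v = form_sum S d E (\<lambda>s i. v (s, i)) (\<lambda>s i. v (s, i))"
    using form_sum_eq_sform_block_diag[OF assms(1)] by simp
  thus "Im (sform (S \<times> {..<d}) (block_diag E) v v) = 0 \<and> 0 \<le> Re (sform (S \<times> {..<d}) (block_diag E) v v)"
    using form_sum_nonneg[OF assms(2), of S "\<lambda>s i. v (s, i)"] by simp
qed

lemma form_sum_triangle:
  assumes "finite S" "psd_form {..<d} E"
  shows "sqrt (Re (form_sum S d E (\<lambda>s i. G s i + H s i) (\<lambda>s i. G s i + H s i)))
    \<le> sqrt (Re (form_sum S d E G G)) + sqrt (Re (form_sum S d E H H))"
proof -
  have "(\<lambda>(s, i). G s i + H s i) = (\<lambda>p. (\<lambda>(s, i). G s i) p + (\<lambda>(s, i). H s i) p)" by auto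
  thus ?thesis unfolding form_sum_eq_sform_block_diag[OF assms(1)]
    using psd_form_triangle[OF psd_form_block_diag[OF assms]] by simp
qed

definition id_form :: "nat \<Rightarrow> nat \<Rightarrow> complex" where
  "id_form i k = (if i = k then 1 else 0)"

lemma sform_id_form: "sform {..<d} id_form v v = of_real (sq_norm d v)"
proof -
  have "(\<Sum>j<d. cnj (v i) * id_form i j * v j) = (\<Sum>j<d. if i = j then cnj (v i) * v j else 0)" for i
    unfolding id_form_def by (intro sum.cong) auto
  thus ?thesis unfolding sform_def of_real_sq_norm by simp
qed

lemma psd_form_id_form: "psd_form {..<d} id_form"
  unfolding psd_form_def sform_id_form by (simp add: sq_norm_nonneg)

lemma form_sum_id_form: "form_sum S d id_form G G = of_real (\<Sum>s\<in>S. sq_norm d (G s))"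
  unfolding form_sum_def sform_id_form by simp

lemma form_sum_povm:
  assumes "\<And>i k. i < d \<Longrightarrow> k < d \<Longrightarrow> (\<Sum>y<N. E y i k) = id_form i k"
  shows "(\<Sum>y<N. form_sum S d (E y) G G) = form_sum S d id_form G G"
proof -
  have "(\<Sum>y<N. form_sum S d (E y) G G) = (\<Sum>s\<in>S. \<Sum>y<N. \<Sum>i<d. \<Sum>k<d. cnj (G s i) * E y i k * G s k)"
    unfolding form_sum_def sform_def by (rule sum.swap)
  also have "\<dots> = (\<Sum>s\<in>S. \<Sum>i<d. \<Sum>y<N. \<Sum>k<d. cnj (G s i) * E y i k * G s k)"
    by (intro sum.cong refl sum.swap)
  also have "\<dots> = (\<Sum>s\<in>S. \<Sum>i<d. \<Sum>k<d. \<Sum>y<N. cnj (G s i) * E y i k * G s k)"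
    by (intro sum.cong refl sum.swap)
  also have "\<dots> = form_sum S d id_form G G"
    unfolding form_sum_def sform_def using assms
    by (intro sum.cong refl) (simp add: sum_distrib_left[symmetric] sum_distrib_right[symmetric])
  finally show ?thesis .
qed

lemma Cauchy_Schwarz_sum_real:
  fixes u v :: "'a \<Rightarrow> real"
  shows "(\<Sum>i\<in>I. u i * v i)\<^sup>2 \<le> (\<Sum>i\<in>I. (u i)\<^sup>2) * (\<Sum>i\<in>I. (v i)\<^sup>2)"
proof -
  have "0 \<le> (\<Sum>i\<in>I. \<Sum>j\<in>I. (u i * v j - u j * v i)\<^sup>2)" by (intro sum_nonneg) auto
  also have "(\<Sum>i\<in>I. \<Sum>j\<in>I. (u i * v j - u j * v i)\<^sup>2) =
     (\<Sum>i\<in>I. \<Sum>j\<in>I. (u i)\<^sup>2 * (v j)\<^sup>2) + (\<Sum>i\<in>I. \<Sum>j\<in>I. (u j)\<^sup>2 * (v i)\<^sup>2)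
     - 2 * (\<Sum>i\<in>I. \<Sum>j\<in>I. (u i * v i) * (u j * v j))"
    by (simp add: power2_eq_square algebra_simps sum.distrib sum_subtractf sum_distrib_left)
  also have "(\<Sum>i\<in>I. \<Sum>j\<in>I. (u j)\<^sup>2 * (v i)\<^sup>2) = (\<Sum>i\<in>I. \<Sum>j\<in>I. (u i)\<^sup>2 * (v j)\<^sup>2)"
    by (rule sum.swap)
  finally show ?thesis by (simp add: sum_product power2_eq_square)
qed

definition fam_sq_norm :: "'s set \<Rightarrow> nat \<Rightarrow> ('s \<Rightarrow> nat \<Rightarrow> complex) \<Rightarrow> real" where
  "fam_sq_norm S d G = (\<Sum>s\<in>S. sq_norm d (G s))"

lemma fam_sq_norm_nonneg: "0 \<le> fam_sq_norm S d G"
  unfolding fam_sq_norm_def by (simp add: sum_nonneg sq_norm_nonneg)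

lemma fam_sq_norm_triangle:
  assumes "finite S"
  shows "sqrt (fam_sq_norm S d (\<lambda>s i. G s i + H s i)) \<le> sqrt (fam_sq_norm S d G) + sqrt (fam_sq_norm S d H)"
  using form_sum_triangle[OF assms psd_form_id_form, of d G H]
  unfolding form_sum_id_form fam_sq_norm_def by simp

section \<open>The hybrid argument\<close>

definition kraus_words :: "nat \<Rightarrow> nat \<Rightarrow> nat list set" where
  "kraus_words D t = {s. set s \<subseteq> {..<D} \<and> length s = 2 * t + 1}"

lemma finite_kraus_words: "finite (kraus_words D t)"
  unfolding kraus_words_def by (rule finite_lists_length_eq) simp

lemma sum_kraus_words_0: "(\<Sum>s\<in>kraus_words D 0. f s) = (\<Sum>l<D. f [l])"
proof -
  have "kraus_words D 0 = (\<lambda>l. [l]) ` {..<D}" unfolding kraus_words_def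
    by (auto simp: length_Suc_conv)
  thus ?thesis by (simp add: sum.reindex inj_on_def)
qed

lemma sum_lists_length_Suc:
  "(\<Sum>s\<in>{s. set s \<subseteq> {..<D} \<and> length s = Suc n}. f s) =
     (\<Sum>s\<in>{s. set s \<subseteq> {..<D} \<and> length s = n}. \<Sum>l<D. f (l # s))"
  unfolding lists_length_Suc_eq
  by (subst sum.reindex[OF inj_split_Cons]) (simp add: split_def sum.cartesian_product')

lemma sum_kraus_words_Suc:
  "(\<Sum>s\<in>kraus_words D (Suc t). f s) = (\<Sum>s\<in>kraus_words D t. \<Sum>l<D. \<Sum>l'<D. f (l' # l # s))"
proof -
  have "2 * Suc t + 1 = Suc (Suc (2 * t + 1))" by simp
  thus ?thesis unfolding kraus_words_def
    by (simp only: sum_lists_length_Suc)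
qed

lemma fam_sq_norm_kraus_step:
  assumes "kraus_isometry d K'"
  shows "fam_sq_norm (kraus_words (d*d) (Suc t)) d (\<lambda>s. op_apply d (K' (hd s)) (W (hd (tl s)) (tl (tl s))))
     = (\<Sum>s\<in>kraus_words (d*d) t. \<Sum>l<d*d. sq_norm d (W l s))"
  unfolding fam_sq_norm_def sum_kraus_words_Suc by (simp add: kraus_isometry_sq_norm[OF assms])

lemma fam_sq_norm_round:
  assumes "kraus_isometry d K" "kraus_isometry d K'"
  shows "fam_sq_norm (kraus_words (d*d) (Suc t)) d
      (\<lambda>s. op_apply d (K' (hd s)) (oracle_vec M ob (op_apply d (K (hd (tl s))) (G (tl (tl s))))))
    = fam_sq_norm (kraus_words (d*d) t) d G"
proof -
  have "fam_sq_norm (kraus_words (d*d) (Suc t)) d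
      (\<lambda>s. op_apply d (K' (hd s)) (oracle_vec M ob (op_apply d (K (hd (tl s))) (G (tl (tl s))))))
    = (\<Sum>s\<in>kraus_words (d*d) t. \<Sum>l<d*d. sq_norm d (oracle_vec M ob (op_apply d (K l) (G s))))"
    by (rule fam_sq_norm_kraus_step[OF assms(2)])
  also have "\<dots> = fam_sq_norm (kraus_words (d*d) t) d G"
    unfolding sq_norm_oracle_vec kraus_isometry_sq_norm[OF assms(1)] fam_sq_norm_def ..
  finally show ?thesis .
qed

text \<open>A word \<open>l'\<^sub>t # l\<^sub>t # \<dots> # l'\<^sub>1 # l\<^sub>1 # [l\<^sub>0]\<close> picks the initial vector \<open>F0 l\<^sub>0\<close> and, in round \<open>r\<close>,
  the Kraus operators \<open>KK (j + r - 1) l\<^sub>r\<close> before and \<open>KK' (j + r - 1) l'\<^sub>r\<close> after the oracle.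
  The state after \<open>t\<close> rounds is the sum of the rank-one matrices of all branch vectors.\<close>
fun branch :: "nat \<Rightarrow> nat \<Rightarrow> (nat \<Rightarrow> nat \<Rightarrow> nat \<Rightarrow> nat \<Rightarrow> complex) \<Rightarrow> (nat \<Rightarrow> nat \<Rightarrow> nat \<Rightarrow> nat \<Rightarrow> complex)
    \<Rightarrow> nat option \<Rightarrow> nat \<Rightarrow> (nat \<Rightarrow> nat \<Rightarrow> complex) \<Rightarrow> nat \<Rightarrow> nat list \<Rightarrow> nat \<Rightarrow> complex" where
  "branch d M KK KK' ob j F0 0 s = F0 (hd s)"
| "branch d M KK KK' ob j F0 (Suc t) s =
     op_apply d (KK' (j + t) (hd s))
       (oracle_vec M ob (op_apply d (KK (j + t) (hd (tl s))) (branch d M KK KK' ob j F0 t (tl (tl s)))))"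

locale query_branches =
  fixes N M d j m :: nat and KK KK' :: "nat \<Rightarrow> nat \<Rightarrow> nat \<Rightarrow> nat \<Rightarrow> complex"
    and F0 :: "nat \<Rightarrow> nat \<Rightarrow> complex"
  assumes dim: "d = N * M"
    and isometries: "\<And>t. t < m \<Longrightarrow> kraus_isometry d (KK (j + t)) \<and> kraus_isometry d (KK' (j + t))"
    and initial_norm: "(\<Sum>l<d*d. sq_norm d (F0 l)) = 1"
begin

abbreviation run :: "nat option \<Rightarrow> nat \<Rightarrow> nat list \<Rightarrow> nat \<Rightarrow> complex" where
  "run ob t \<equiv> branch d M KK KK' ob j F0 t"

abbreviation words :: "nat \<Rightarrow> nat list set" where
  "words t \<equiv> kraus_words (d*d) t"

lemma fam_sq_norm_run_None: "t \<le> m \<Longrightarrow> fam_sq_norm (words t) d (run None t) = 1"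
proof (induction t)
  case 0
  show ?case using initial_norm unfolding fam_sq_norm_def sum_kraus_words_0 by simp
next
  case (Suc t)
  thus ?case using fam_sq_norm_round isometries by simp
qed

definition deviation :: "nat \<Rightarrow> nat \<Rightarrow> nat list \<Rightarrow> nat \<Rightarrow> complex" where
  "deviation x t = (\<lambda>s i. run (Some x) t s i - run None t s i)"

definition deviation_norm :: "nat \<Rightarrow> nat \<Rightarrow> real" where
  "deviation_norm x t = sqrt (fam_sq_norm (words t) d (deviation x t))"

definition query_mass :: "nat \<Rightarrow> nat \<Rightarrow> real" where
  "query_mass t x = (\<Sum>s\<in>words t. \<Sum>l<d*d. block_mass d M x (op_apply d (KK (j + t) l) (run None t s)))"

lemma query_mass_nonneg: "0 \<le> query_mass t x"
  unfolding query_mass_def by (simp add: sum_nonneg block_mass_nonneg)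

lemma sum_query_mass: "t < m \<Longrightarrow> (\<Sum>x<N. query_mass t x) = 1"
proof -
  assume "t < m"
  hence iso: "kraus_isometry d (KK (j + t))" using isometries by simp
  have "(\<Sum>x<N. query_mass t x) =
      (\<Sum>s\<in>words t. \<Sum>l<d*d. \<Sum>x<N. block_mass d M x (op_apply d (KK (j + t) l) (run None t s)))"
    unfolding query_mass_def by (subst sum.swap) (simp add: sum.swap[where B = "{..<N}"])
  also have "\<dots> = fam_sq_norm (words t) d (run None t)"
    unfolding sum_block_mass[OF dim] kraus_isometry_sq_norm[OF iso] fam_sq_norm_def ..
  finally show ?thesis using fam_sq_norm_run_None \<open>t < m\<close> by simp
qed

lemma deviation_norm_nonneg: "0 \<le> deviation_norm x t"
  unfolding deviation_norm_def by (simp add: fam_sq_norm_nonneg)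

lemma deviation_norm_0: "deviation_norm x 0 = 0"
  unfolding deviation_norm_def deviation_def fam_sq_norm_def sq_norm_def by simp

text \<open>After one more round the deviation is the old one passed through an isometric round, plus the
  unqueried branches hit by \<open>O\<^sub>x - 1\<close>, which only sees block \<open>x\<close>.\<close>
lemma deviation_norm_Suc_le:
  assumes "t < m"
  shows "deviation_norm x (Suc t) \<le> deviation_norm x t + 2 * sqrt (query_mass t x)"
proof -
  have iso: "kraus_isometry d (KK (j + t))" "kraus_isometry d (KK' (j + t))"
    using isometries assms by auto
  define W where "W l s = op_apply d (KK (j + t) l) (run None t s)" for l s
  define A where "A s = op_apply d (KK' (j + t) (hd s))
      (oracle_vec M (Some x) (op_apply d (KK (j + t) (hd (tl s))) (deviation x t (tl (tl s)))))" for s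
  define B where "B s = op_apply d (KK' (j + t) (hd s))
      (\<lambda>i. oracle_sign M x i * W (hd (tl s)) (tl (tl s)) i - W (hd (tl s)) (tl (tl s)) i)" for s
  have "deviation x (Suc t) s = (\<lambda>i. A s i + B s i)" for s
  proof -
    let ?K = "op_apply d (KK (j + t) (hd (tl s)))" and ?K' = "op_apply d (KK' (j + t) (hd s))"
    have "run (Some x) t (tl (tl s)) = (\<lambda>i. deviation x t (tl (tl s)) i + run None t (tl (tl s)) i)"
      unfolding deviation_def by simp
    hence "?K (run (Some x) t (tl (tl s))) = (\<lambda>i. ?K (deviation x t (tl (tl s))) i + W (hd (tl s)) (tl (tl s)) i)"
      by (simp only: W_def op_apply_add)
    thus ?thesis
      unfolding deviation_def A_def B_def branch.simps oracle_vec_def op_apply_add[symmetric] op_apply_diff[symmetric]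
      by (simp add: W_def algebra_simps)
  qed
  hence "deviation_norm x (Suc t) \<le> sqrt (fam_sq_norm (words (Suc t)) d A) + sqrt (fam_sq_norm (words (Suc t)) d B)"
    unfolding deviation_norm_def using fam_sq_norm_triangle[OF finite_kraus_words] by presburger
  also have "fam_sq_norm (words (Suc t)) d A = (deviation_norm x t)\<^sup>2"
    unfolding A_def fam_sq_norm_round[OF iso] deviation_norm_def by (simp add: fam_sq_norm_nonneg)
  also have "fam_sq_norm (words (Suc t)) d B =
      (\<Sum>s\<in>words t. \<Sum>l<d*d. sq_norm d (\<lambda>i. oracle_sign M x i * W l s i - W l s i))"
    unfolding B_def by (rule fam_sq_norm_kraus_step[OF iso(2)])
  also have "\<dots> = 4 * query_mass t x"
    unfolding sq_norm_oracle_flip query_mass_def W_def by (simp add: sum_distrib_left)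
  finally show ?thesis by (simp add: real_sqrt_mult deviation_norm_nonneg)
qed

lemma deviation_norm_le: "t \<le> m \<Longrightarrow> deviation_norm x t \<le> 2 * (\<Sum>t'<t. sqrt (query_mass t' x))"
proof (induction t)
  case (Suc t)
  thus ?case using deviation_norm_Suc_le[of t x] by simp
qed (simp add: deviation_norm_0)

lemma sum_deviation_norm_sq_le: "(\<Sum>x<N. (deviation_norm x m)\<^sup>2) \<le> 4 * (real m)\<^sup>2"
proof -
  have "(deviation_norm x m)\<^sup>2 \<le> 4 * real m * (\<Sum>t<m. query_mass t x)" for x
  proof -
    have "(deviation_norm x m)\<^sup>2 \<le> 4 * (\<Sum>t<m. 1 * sqrt (query_mass t x))\<^sup>2"
      using deviation_norm_le[of m x] deviation_norm_nonneg power_mono[of _ _ 2]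
      by (fastforce simp: power_mult_distrib)
    also have "\<dots> \<le> 4 * ((\<Sum>t<m. 1\<^sup>2) * (\<Sum>t<m. (sqrt (query_mass t x))\<^sup>2))"
      using Cauchy_Schwarz_sum_real[of "\<lambda>_. 1" "\<lambda>t. sqrt (query_mass t x)" "{..<m}"] by simp
    finally show ?thesis using query_mass_nonneg by simp
  qed
  hence "(\<Sum>x<N. (deviation_norm x m)\<^sup>2) \<le> (\<Sum>x<N. 4 * real m * (\<Sum>t<m. query_mass t x))"
    by (intro sum_mono)
  also have "\<dots> = 4 * real m * (\<Sum>t<m. \<Sum>x<N. query_mass t x)"
    by (simp add: sum_distrib_left sum.swap[of _ "{..<N}"])
  also have "\<dots> = 4 * (real m)\<^sup>2" using sum_query_mass by (simp add: power2_eq_square)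
  finally show ?thesis .
qed

definition success :: "(nat \<Rightarrow> nat \<Rightarrow> nat \<Rightarrow> complex) \<Rightarrow> nat option \<Rightarrow> nat \<Rightarrow> real" where
  "success E ob x = Re (form_sum (words m) d (E x) (run ob m) (run ob m))"

context
  fixes E :: "nat \<Rightarrow> nat \<Rightarrow> nat \<Rightarrow> complex"
  assumes povm_psd: "\<And>y. y < N \<Longrightarrow> psd_form {..<d} (E y)"
    and povm_sum: "\<And>i k. i < d \<Longrightarrow> k < d \<Longrightarrow> (\<Sum>y<N. E y i k) = id_form i k"
begin

lemma success_nonneg: "x < N \<Longrightarrow> 0 \<le> success E ob x"
  unfolding success_def using form_sum_nonneg(2)[OF povm_psd] by blast

lemma sum_success_None: "(\<Sum>x<N. success E None x) = 1"
proof -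
  have "(\<Sum>x<N. success E None x) = Re (\<Sum>y<N. form_sum (words m) d (E y) (run None m) (run None m))"
    unfolding success_def by (simp add: Re_sum)
  also have "\<dots> = fam_sq_norm (words m) d (run None m)"
    using form_sum_povm[OF povm_sum, where S = "words m" and G = "run None m"]
    unfolding form_sum_id_form fam_sq_norm_def by simp
  finally show ?thesis using fam_sq_norm_run_None by simp
qed

lemma sqrt_success_le:
  assumes "x < N"
  shows "sqrt (success E (Some x) x) \<le> sqrt (success E None x) + deviation_norm x m"
proof -
  let ?F = "\<lambda>y. Re (form_sum (words m) d (E y) (deviation x m) (deviation x m))"
  have "?F x \<le> (\<Sum>y<N. ?F y)"
    using assms form_sum_nonneg(2)[OF povm_psd] by (intro member_le_sum) auto
  also have "\<dots> = fam_sq_norm (words m) d (deviation x m)"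
    using form_sum_povm[OF povm_sum, where S = "words m" and G = "deviation x m"]
    unfolding form_sum_id_form fam_sq_norm_def by (metis Re_complex_of_real Re_sum)
  finally have "sqrt (?F x) \<le> deviation_norm x m" unfolding deviation_norm_def by simp
  moreover have "run (Some x) m = (\<lambda>s i. run None m s i + deviation x m s i)"
    unfolding deviation_def by simp
  hence "sqrt (success E (Some x) x) \<le> sqrt (success E None x) + sqrt (?F x)"
    unfolding success_def by (simp only: form_sum_triangle[OF finite_kraus_words povm_psd[OF assms]])
  ultimately show ?thesis by simp
qed

text \<open>Summing \<open>success E (Some x) x \<le> (sqrt (success E None x) + deviation_norm x m)\<^sup>2\<close> over \<open>x\<close>, the
  cross term is bounded by Cauchy-Schwarz, since \<open>success E None\<close> sums to one.\<close>
lemma sum_success_le: "(\<Sum>x<N. success E (Some x) x) \<le> (2 * real m + 1)\<^sup>2"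
proof -
  let ?b = "success E None" and ?e = "\<lambda>x. deviation_norm x m"
  have "success E (Some x) x \<le> (sqrt (?b x) + ?e x)\<^sup>2" if "x < N" for x
    using sqrt_success_le[OF that] success_nonneg[OF that] deviation_norm_nonneg
      power_mono[of "sqrt (success E (Some x) x)" _ 2] by simp
  hence "(\<Sum>x<N. success E (Some x) x) \<le> (\<Sum>x<N. (sqrt (?b x) + ?e x)\<^sup>2)"
    by (intro sum_mono) simp
  also have "\<dots> = (\<Sum>x<N. ?b x) + 2 * (\<Sum>x<N. sqrt (?b x) * ?e x) + (\<Sum>x<N. (?e x)\<^sup>2)"
    using success_nonneg by (simp add: power2_sum sum.distrib sum_distrib_left mult.assoc)
  also have "(\<Sum>x<N. sqrt (?b x) * ?e x) \<le> 2 * real m"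
  proof (rule power2_le_imp_le)
    have "(\<Sum>x<N. sqrt (?b x) * ?e x)\<^sup>2 \<le> (\<Sum>x<N. (sqrt (?b x))\<^sup>2) * (\<Sum>x<N. (?e x)\<^sup>2)"
      by (rule Cauchy_Schwarz_sum_real)
    also have "(\<Sum>x<N. (sqrt (?b x))\<^sup>2) = 1" using success_nonneg sum_success_None by simp
    finally show "(\<Sum>x<N. sqrt (?b x) * ?e x)\<^sup>2 \<le> (2 * real m)\<^sup>2"
      using sum_deviation_norm_sq_le by (simp add: power_mult_distrib)
  qed simp
  finally show ?thesis
    using sum_success_None sum_deviation_norm_sq_le by (simp add: power2_eq_square algebra_simps)
qed

end

end

section \<open>Query states as sums over branches\<close>

definition represents :: "nat \<Rightarrow> 'a set \<Rightarrow> ('a \<Rightarrow> nat \<Rightarrow> complex) \<Rightarrow> complex mat \<Rightarrow> bool" where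
  "represents d S V A \<longleftrightarrow> A \<in> carrier_mat d d \<and> (\<forall>a<d. \<forall>b<d. A $$ (a, b) = (\<Sum>s\<in>S. V s a * cnj (V s b)))"

lemma op_apply_outer:
  "op_apply d K u i * cnj (op_apply d K u k) = (\<Sum>a<d. \<Sum>b<d. K i a * (u a * cnj (u b)) * cnj (K k b))"
  unfolding op_apply_def by (simp add: sum_product cnj_sum algebra_simps)

lemma kraus_rep_represents:
  assumes K: "kraus_rep d T K" and R: "represents d S V A"
  shows "represents d (S \<times> {..<d*d}) (\<lambda>(s, l). op_apply d (K l) (V s)) (T A)"
  unfolding represents_def
proof (intro conjI allI impI)
  have A: "A \<in> carrier_mat d d" using R unfolding represents_def by auto
  show "T A \<in> carrier_mat d d" using K A unfolding kraus_rep_def by auto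
  fix i k assume ik: "i < d" "k < d"
  have "T A $$ (i, k) = (\<Sum>l<d*d. \<Sum>a<d. \<Sum>b<d. \<Sum>s\<in>S. K l i a * (V s a * cnj (V s b)) * cnj (K l k b))"
    using K A R ik unfolding kraus_rep_def represents_def
    by (simp add: sum_distrib_left sum_distrib_right)
  also have "\<dots> = (\<Sum>l<d*d. \<Sum>a<d. \<Sum>s\<in>S. \<Sum>b<d. K l i a * (V s a * cnj (V s b)) * cnj (K l k b))"
    by (intro sum.cong refl sum.swap)
  also have "\<dots> = (\<Sum>l<d*d. \<Sum>s\<in>S. \<Sum>a<d. \<Sum>b<d. K l i a * (V s a * cnj (V s b)) * cnj (K l k b))"
    by (intro sum.cong refl sum.swap)
  also have "\<dots> = (\<Sum>s\<in>S. \<Sum>l<d*d. op_apply d (K l) (V s) i * cnj (op_apply d (K l) (V s) k))"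
    unfolding op_apply_outer by (rule sum.swap)
  finally show "T A $$ (i, k) = (\<Sum>p\<in>S \<times> {..<d*d}.
      (\<lambda>(s, l). op_apply d (K l) (V s)) p i * cnj ((\<lambda>(s, l). op_apply d (K l) (V s)) p k))"
    by (simp add: sum.cartesian_product')
qed

lemma orcl_represents:
  assumes R: "represents (N * M) S V A"
  shows "represents (N * M) S (\<lambda>s. oracle_vec M (Some x) (V s)) (orcl N M x A)"
  unfolding represents_def
proof (intro conjI allI impI)
  show "orcl N M x A \<in> carrier_mat (N * M) (N * M)" unfolding orcl_def by simp
  fix a b assume ab: "a < N * M" "b < N * M"
  have "orcl N M x A $$ (a, b) = oracle_sign M x a * oracle_sign M x b * A $$ (a, b)"
    unfolding orcl_def oracle_sign_def using ab by simp
  also have "\<dots> = (\<Sum>s\<in>S. oracle_vec M (Some x) (V s) a * cnj (oracle_vec M (Some x) (V s) b))"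
    using R ab unfolding represents_def oracle_vec_def by (simp add: sum_distrib_left oracle_sign_def algebra_simps)
  finally show "orcl N M x A $$ (a, b) =
      (\<Sum>s\<in>S. oracle_vec M (Some x) (V s) a * cnj (oracle_vec M (Some x) (V s) b))" .
qed

lemma represents_round:
  assumes K: "kraus_rep (N * M) T K" and K': "kraus_rep (N * M) T' K'"
    and R: "represents (N * M) (kraus_words ((N*M)*(N*M)) t) V A"
  shows "represents (N * M) (kraus_words ((N*M)*(N*M)) (Suc t))
     (\<lambda>s. op_apply (N*M) (K' (hd s)) (oracle_vec M (Some x) (op_apply (N*M) (K (hd (tl s))) (V (tl (tl s))))))
     (T' (orcl N M x (T A)))"
proof -
  let ?d = "N * M"
  let ?W = "\<lambda>s l l'. op_apply ?d (K' l') (oracle_vec M (Some x) (op_apply ?d (K l) (V s)))"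
  have "represents ?d ((kraus_words (?d*?d) t \<times> {..<?d*?d}) \<times> {..<?d*?d})
      (\<lambda>((s, l), l'). ?W s l l') (T' (orcl N M x (T A)))"
    using kraus_rep_represents[OF K' orcl_represents[OF kraus_rep_represents[OF K R]]]
    by (simp add: split_def)
  moreover have "(\<Sum>q\<in>(kraus_words (?d*?d) t \<times> {..<?d*?d}) \<times> {..<?d*?d}.
        (\<lambda>((s, l), l'). ?W s l l') q a * cnj ((\<lambda>((s, l), l'). ?W s l l') q b))
      = (\<Sum>s\<in>kraus_words (?d*?d) (Suc t). ?W (tl (tl s)) (hd (tl s)) (hd s) a * cnj (?W (tl (tl s)) (hd (tl s)) (hd s) b))"
    for a b
    unfolding sum_kraus_words_Suc by (simp add: sum.cartesian_product')
  ultimately show ?thesis unfolding represents_def by simp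
qed

lemma mtrace_mult_represents:
  assumes R: "represents d S V A" and E: "E \<in> carrier_mat d d"
  shows "mtrace (A * E) = form_sum S d (\<lambda>a b. E $$ (a, b)) V V"
proof -
  have A: "A \<in> carrier_mat d d" using R unfolding represents_def by auto
  have "mtrace (A * E) = (\<Sum>i<d. \<Sum>k<d. A $$ (i, k) * E $$ (k, i))"
    unfolding mtrace_def using A E by (simp add: scalar_prod_def atLeast0LessThan)
  also have "\<dots> = (\<Sum>i<d. \<Sum>k<d. \<Sum>s\<in>S. cnj (V s k) * E $$ (k, i) * V s i)"
    using R unfolding represents_def
    by (intro sum.cong refl) (simp add: sum_distrib_left sum_distrib_right algebra_simps)
  also have "\<dots> = (\<Sum>k<d. \<Sum>s\<in>S. \<Sum>i<d. cnj (V s k) * E $$ (k, i) * V s i)"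
    by (subst sum.swap) (intro sum.cong refl sum.swap)
  also have "\<dots> = form_sum S d (\<lambda>a b. E $$ (a, b)) V V"
    unfolding form_sum_def sform_def by (rule sum.swap)
  finally show ?thesis .
qed

definition query_round :: "nat \<Rightarrow> nat \<Rightarrow> (nat \<Rightarrow> complex mat \<Rightarrow> complex mat) \<Rightarrow> (nat \<Rightarrow> complex mat \<Rightarrow> complex mat)
    \<Rightarrow> nat \<Rightarrow> nat \<Rightarrow> complex mat \<Rightarrow> complex mat" where
  "query_round N M T T' x r A = T' r (orcl N M x (T r A))"

fun query_rounds :: "nat \<Rightarrow> nat \<Rightarrow> (nat \<Rightarrow> complex mat \<Rightarrow> complex mat) \<Rightarrow> (nat \<Rightarrow> complex mat \<Rightarrow> complex mat)
    \<Rightarrow> nat \<Rightarrow> nat \<Rightarrow> nat \<Rightarrow> complex mat \<Rightarrow> complex mat" where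
  "query_rounds N M T T' x j 0 A = A"
| "query_rounds N M T T' x j (Suc t) A = query_round N M T T' x (j + t) (query_rounds N M T T' x j t A)"

lemma density_op_initial_branches:
  assumes "density_op d \<sigma>"
  obtains F0 where "represents d (kraus_words (d*d) 0) (\<lambda>s. F0 (hd s)) \<sigma>" "(\<Sum>l<d*d. sq_norm d (F0 l)) = 1"
proof -
  have psd: "psd d \<sigma>" and tr: "mtrace \<sigma> = 1" using assms unfolding density_op_def by auto
  have carrier: "\<sigma> \<in> carrier_mat d d" using psd unfolding psd_def by simp
  obtain w where w: "\<And>a b. a < d \<Longrightarrow> b < d \<Longrightarrow> \<sigma> $$ (a, b) = (\<Sum>l<d. w l a * cnj (w l b))"
    using psd_form_gram[OF psd_imp_psd_form[OF psd]] by blast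
  define F0 where "F0 l = (if l < d then w l else (\<lambda>_. 0))" for l
  have truncate: "(\<Sum>l<d*d. if l < d then g l else 0) = (\<Sum>l<d. g l)" for g :: "nat \<Rightarrow> 'b::comm_monoid_add"
  proof -
    have "{..<d*d} \<inter> {l. l < d} = {..<d}" by (cases d) auto
    thus ?thesis by (simp add: sum.If_cases)
  qed
  have "represents d (kraus_words (d*d) 0) (\<lambda>s. F0 (hd s)) \<sigma>"
    unfolding represents_def sum_kraus_words_0 using carrier w
    by (simp add: F0_def if_distrib[of "\<lambda>v. v _ * _"] truncate cong: if_cong)
  moreover have "(\<Sum>l<d*d. sq_norm d (F0 l)) = 1"
  proof -
    have "(\<Sum>l<d*d. sq_norm d (F0 l)) = (\<Sum>l<d*d. if l < d then sq_norm d (w l) else 0)"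
      unfolding F0_def by (intro sum.cong refl) (simp add: sq_norm_def)
    hence "of_real (\<Sum>l<d*d. sq_norm d (F0 l)) = (\<Sum>l<d. \<Sum>i<d. cnj (w l i) * w l i)"
      unfolding truncate by (simp only: of_real_sum of_real_sq_norm)
    also have "\<dots> = mtrace \<sigma>"
      using carrier w unfolding mtrace_def by (subst sum.swap) (simp add: mult.commute)
    finally show ?thesis using tr by (metis of_real_1 of_real_eq_iff)
  qed
  ultimately show ?thesis using that by blast
qed

lemma represents_query_rounds:
  assumes kraus: "\<And>r. r < j + m \<Longrightarrow> kraus_rep (N * M) (T r) (KK r) \<and> kraus_rep (N * M) (T' r) (KK' r)"
    and initial: "represents (N * M) (kraus_words ((N*M)*(N*M)) 0) (\<lambda>s. F0 (hd s)) \<sigma>"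
  shows "t \<le> m \<Longrightarrow> represents (N * M) (kraus_words ((N*M)*(N*M)) t)
     (branch (N * M) M KK KK' (Some x) j F0 t) (query_rounds N M T T' x j t \<sigma>)"
proof (induction t)
  case 0
  show ?case using initial by simp
next
  case (Suc t)
  hence "j + t < j + m" by simp
  hence "kraus_rep (N * M) (T (j + t)) (KK (j + t))" "kraus_rep (N * M) (T' (j + t)) (KK' (j + t))"
    using kraus by auto
  thus ?case using represents_round Suc by (simp add: query_round_def)
qed

lemma noiseless_success_le:
  assumes kraus: "\<And>r. r < j + m \<Longrightarrow> kraus_rep (N * M) (T r) (KK r) \<and> kraus_isometry (N * M) (KK r)"
    and kraus': "\<And>r. r < j + m \<Longrightarrow> kraus_rep (N * M) (T' r) (KK' r) \<and> kraus_isometry (N * M) (KK' r)"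
    and \<sigma>: "density_op (N * M) \<sigma>" and E: "povm (N * M) N E"
  shows "(\<Sum>x<N. Re (mtrace (query_rounds N M T T' x j m \<sigma> * E x))) \<le> (2 * real m + 1)\<^sup>2"
proof -
  obtain F0 where F0: "represents (N * M) (kraus_words ((N*M)*(N*M)) 0) (\<lambda>s. F0 (hd s)) \<sigma>"
    "(\<Sum>l<(N*M)*(N*M). sq_norm (N * M) (F0 l)) = 1"
    using density_op_initial_branches[OF \<sigma>] by blast
  interpret query_branches N M "N * M" j m KK KK' F0
    using kraus kraus' F0(2) by unfold_locales auto
  let ?E = "\<lambda>y a b. E y $$ (a, b)"
  have psd: "\<And>y. y < N \<Longrightarrow> psd_form {..<N * M} (?E y)"
    and sum: "\<And>i k. i < N * M \<Longrightarrow> k < N * M \<Longrightarrow> (\<Sum>y<N. ?E y i k) = id_form i k"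
    using E unfolding povm_def id_form_def by (auto intro: psd_imp_psd_form)
  have "Re (mtrace (query_rounds N M T T' x j m \<sigma> * E x)) = success ?E (Some x) x" if "x < N" for x
  proof -
    have "E x \<in> carrier_mat (N * M) (N * M)" using E that unfolding povm_def psd_def by auto
    moreover have "represents (N * M) (words m) (run (Some x) m) (query_rounds N M T T' x j m \<sigma>)"
      using kraus kraus' by (intro represents_query_rounds[OF _ F0(1)]) auto
    ultimately show ?thesis unfolding success_def by (simp add: mtrace_mult_represents)
  qed
  thus ?thesis using sum_success_le[OF psd sum] by simp
qed

section \<open>Decomposition of the noisy state\<close>

definition lin_functional :: "nat \<Rightarrow> (complex mat \<Rightarrow> complex) \<Rightarrow> bool" where
  "lin_functional d \<phi> \<longleftrightarrow> (\<forall>A\<in>carrier_mat d d. \<forall>B\<in>carrier_mat d d. \<phi> (A + B) = \<phi> A + \<phi> B) \<and>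
     (\<forall>A\<in>carrier_mat d d. \<forall>c. \<phi> (c \<cdot>\<^sub>m A) = c * \<phi> A)"

lemma lin_functional_trace_mult:
  assumes E: "E \<in> carrier_mat d d"
  shows "lin_functional d (\<lambda>A. mtrace (A * E))"
  unfolding lin_functional_def mtrace_def
proof (intro conjI ballI allI)
  fix A B :: "complex mat" assume A: "A \<in> carrier_mat d d" and B: "B \<in> carrier_mat d d"
  show "(\<Sum>i<dim_row ((A + B) * E). ((A + B) * E) $$ (i, i)) =
      (\<Sum>i<dim_row (A * E). (A * E) $$ (i, i)) + (\<Sum>i<dim_row (B * E). (B * E) $$ (i, i))"
    using A B E by (simp add: add_mult_distrib_mat sum.distrib)
next
  fix A :: "complex mat" and c assume A: "A \<in> carrier_mat d d"
  show "(\<Sum>i<dim_row ((c \<cdot>\<^sub>m A) * E). ((c \<cdot>\<^sub>m A) * E) $$ (i, i)) = c * (\<Sum>i<dim_row (A * E). (A * E) $$ (i, i))"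
    using A E by (simp add: mult_smult_assoc_mat sum_distrib_left)
qed

lemma lin_functional_comp:
  assumes "lin_map d T" "lin_functional d \<phi>"
  shows "lin_functional d (\<lambda>A. \<phi> (T A))"
  using assms unfolding lin_map_def lin_functional_def by simp

lemma lin_map_orcl: "lin_map (N * M) (orcl N M x)"
  unfolding lin_map_def orcl_def by (auto intro!: eq_matI simp: algebra_simps)

lemma mtrace_orcl: "A \<in> carrier_mat (N * M) (N * M) \<Longrightarrow> mtrace (orcl N M x A) = mtrace A"
  unfolding orcl_def mtrace_def by (intro sum.cong) auto

lemma mtrace_noise:
  assumes "\<rho> \<in> carrier_mat d d" "\<tau> \<in> carrier_mat d d" "mtrace \<tau> = 1"
  shows "mtrace (noise p \<tau> \<rho>) = mtrace \<rho>"
proof -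
  have lin: "(\<Sum>i<d. c * \<tau> $$ (i, i) + e * \<rho> $$ (i, i)) = c * mtrace \<tau> + e * mtrace \<rho>" for c e
    using assms(1,2) by (simp add: mtrace_def sum.distrib sum_distrib_left)
  have "mtrace (noise p \<tau> \<rho>) = of_real p * mtrace \<rho> * mtrace \<tau> + of_real (1 - p) * mtrace \<rho>"
    using assms by (subst mtrace_def) (simp add: noise_def lin)
  also have "\<dots> = mtrace \<rho>" using assms(3) by (simp add: algebra_simps flip: of_real_add)
  finally show ?thesis .
qed

context
  fixes N M k :: nat and T T' :: "nat \<Rightarrow> complex mat \<Rightarrow> complex mat"
  assumes channels: "\<forall>i<k. quantum_channel (N * M) (T i) \<and> quantum_channel (N * M) (T' i)"
begin

lemma query_round_carrier_mtrace:
  assumes "r < k" "A \<in> carrier_mat (N * M) (N * M)"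
  shows "query_round N M T T' x r A \<in> carrier_mat (N * M) (N * M)"
    "mtrace (query_round N M T T' x r A) = mtrace A"
proof -
  have "quantum_channel (N * M) (T r)" "quantum_channel (N * M) (T' r)" using channels assms(1) by auto
  moreover have "orcl N M x (T r A) \<in> carrier_mat (N * M) (N * M)" unfolding orcl_def by simp
  ultimately show "query_round N M T T' x r A \<in> carrier_mat (N * M) (N * M)"
    "mtrace (query_round N M T T' x r A) = mtrace A"
    using assms(2) mtrace_orcl unfolding query_round_def quantum_channel_def lin_map_def by auto
qed

lemma lin_functional_query_round:
  assumes "r < k" "lin_functional (N * M) \<phi>"
  shows "lin_functional (N * M) (\<lambda>A. \<phi> (query_round N M T T' x r A))"
proof -
  have "lin_map (N * M) (T r)" "lin_map (N * M) (T' r)"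
    using channels assms(1) unfolding quantum_channel_def by auto
  thus ?thesis unfolding query_round_def
    using lin_functional_comp[OF _ lin_functional_comp[OF lin_map_orcl lin_functional_comp]] assms(2) by blast
qed

context
  fixes p :: real and \<rho>0 \<tau> :: "complex mat"
  assumes \<rho>0: "\<rho>0 \<in> carrier_mat (N * M) (N * M)" "mtrace \<rho>0 = 1"
    and \<tau>: "\<tau> \<in> carrier_mat (N * M) (N * M)" "mtrace \<tau> = 1"
begin

lemma state_carrier_mtrace:
  "k' \<le> k \<Longrightarrow> state N M p \<tau> T T' \<rho>0 x k' \<in> carrier_mat (N * M) (N * M) \<and>
     mtrace (state N M p \<tau> T T' \<rho>0 x k') = 1"
proof (induction k')
  case (Suc k')
  hence S: "state N M p \<tau> T T' \<rho>0 x k' \<in> carrier_mat (N * M) (N * M)"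
    "mtrace (state N M p \<tau> T T' \<rho>0 x k') = 1" by auto
  hence "noise p \<tau> (state N M p \<tau> T T' \<rho>0 x k') \<in> carrier_mat (N * M) (N * M)"
    "mtrace (noise p \<tau> (state N M p \<tau> T T' \<rho>0 x k')) = 1"
    using \<tau> mtrace_noise[OF S(1) \<tau>] by (auto simp: noise_def)
  thus ?case using query_round_carrier_mtrace Suc.prems by (simp add: query_round_def)
qed (use \<rho>0 in simp)

text \<open>Each run of the noisy algorithm either escapes the noise throughout (weight \<open>(1 - p)^k'\<close>),
  or is last reset to \<open>\<tau>\<close> before round \<open>k' - 1 - t\<close> and then runs noiselessly for \<open>t + 1\<close> rounds.\<close>
lemma noise_decomposition:
  "k' \<le> k \<Longrightarrow> lin_functional (N * M) \<phi> \<Longrightarrow> \<phi> (state N M p \<tau> T T' \<rho>0 x k') =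
     of_real ((1 - p) ^ k') * \<phi> (query_rounds N M T T' x 0 k' \<rho>0) +
     (\<Sum>t<k'. of_real (p * (1 - p) ^ t) * \<phi> (query_rounds N M T T' x (k' - 1 - t) (t + 1) \<tau>))"
proof (induction k' arbitrary: \<phi>)
  case (Suc k')
  let ?S = "state N M p \<tau> T T' \<rho>0 x k'" and ?q = "1 - p"
  define \<psi> where "\<psi> A = \<phi> (query_round N M T T' x k' A)" for A
  have lin: "lin_functional (N * M) \<psi>"
    unfolding \<psi>_def using lin_functional_query_round Suc.prems by simp
  have S: "?S \<in> carrier_mat (N * M) (N * M)" "mtrace ?S = 1"
    using state_carrier_mtrace Suc.prems by auto
  have step: "\<psi> (query_rounds N M T T' x j t A) = \<phi> (query_rounds N M T T' x j (Suc t) A)"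
    if "j + t = k'" for j t A
    unfolding \<psi>_def using that by simp
  have "\<phi> (state N M p \<tau> T T' \<rho>0 x (Suc k')) = \<psi> (of_real p \<cdot>\<^sub>m \<tau> + of_real ?q \<cdot>\<^sub>m ?S)"
    unfolding \<psi>_def by (simp add: query_round_def noise_def S(2))
  also have "\<dots> = of_real p * \<psi> \<tau> + of_real ?q * \<psi> ?S"
    using lin \<tau> S unfolding lin_functional_def by simp
  also have "\<psi> ?S = of_real (?q ^ k') * \<psi> (query_rounds N M T T' x 0 k' \<rho>0) +
      (\<Sum>t<k'. of_real (p * ?q ^ t) * \<psi> (query_rounds N M T T' x (k' - 1 - t) (t + 1) \<tau>))"
    using Suc.prems by (intro Suc.IH lin) simp
  also have "\<psi> (query_rounds N M T T' x 0 k' \<rho>0) = \<phi> (query_rounds N M T T' x 0 (Suc k') \<rho>0)"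
    by (rule step) simp
  also have "(\<Sum>t<k'. of_real (p * ?q ^ t) * \<psi> (query_rounds N M T T' x (k' - 1 - t) (t + 1) \<tau>)) =
      (\<Sum>t<k'. of_real (p * ?q ^ t) * \<phi> (query_rounds N M T T' x (k' - 1 - t) (Suc t + 1) \<tau>))"
    by (intro sum.cong refl) (auto simp: \<psi>_def)
  also have "\<psi> \<tau> = \<phi> (query_rounds N M T T' x k' 1 \<tau>)"
    using step[of k' 0] by simp
  also have "of_real p * \<phi> (query_rounds N M T T' x k' 1 \<tau>) +
      of_real ?q * (of_real (?q ^ k') * \<phi> (query_rounds N M T T' x 0 (Suc k') \<rho>0) +
        (\<Sum>t<k'. of_real (p * ?q ^ t) * \<phi> (query_rounds N M T T' x (k' - 1 - t) (Suc t + 1) \<tau>)))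
    = of_real (?q ^ Suc k') * \<phi> (query_rounds N M T T' x 0 (Suc k') \<rho>0) +
      (\<Sum>t<Suc k'. of_real (p * ?q ^ t) * \<phi> (query_rounds N M T T' x (Suc k' - 1 - t) (t + 1) \<tau>))"
    unfolding sum.lessThan_Suc_shift
    by (simp add: distrib_left sum_distrib_left mult_ac del: query_rounds.simps of_real_diff)
  finally show ?case .
qed simp

end

end

lemma quantum_channels_kraus:
  assumes "\<forall>i<k. quantum_channel d (T i) \<and> quantum_channel d (T' i)"
  obtains KK KK' where "\<And>r. r < k \<Longrightarrow> kraus_rep d (T r) (KK r) \<and> kraus_isometry d (KK r)"
    "\<And>r. r < k \<Longrightarrow> kraus_rep d (T' r) (KK' r) \<and> kraus_isometry d (KK' r)"
proof -
  have "\<forall>r. \<exists>K. r < k \<longrightarrow> kraus_rep d (T r) K \<and> kraus_isometry d K"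
    "\<forall>r. \<exists>K. r < k \<longrightarrow> kraus_rep d (T' r) K \<and> kraus_isometry d K"
    using assms quantum_channel_kraus by metis+
  thus ?thesis using that by metis
qed

lemma noise_weighted_sum_closed_form:
  fixes p :: real
  shows "(1 - p) ^ k * (2 * real k + 1)\<^sup>2 + (\<Sum>t<k. p * (1 - p) ^ t * (2 * real (t + 1) + 1)\<^sup>2)
     = 1 + 8 * (\<Sum>t<k. real (t + 1) * (1 - p) ^ t)"
proof (induction k)
  case (Suc k)
  have "(1 - p) ^ Suc k * (2 * real (Suc k) + 1)\<^sup>2 + (\<Sum>t<Suc k. p * (1 - p) ^ t * (2 * real (t + 1) + 1)\<^sup>2)
     = ((1 - p) ^ k * (2 * real k + 1)\<^sup>2 + (\<Sum>t<k. p * (1 - p) ^ t * (2 * real (t + 1) + 1)\<^sup>2))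
       + (1 - p) ^ k * (8 * real k + 8)"
    by (simp add: power2_eq_square algebra_simps)
  thus ?case unfolding Suc.IH by (simp add: algebra_simps)
qed simp

lemma noisy_success_le:
  fixes N M k :: nat and p :: real
  assumes channels: "\<forall>i<k. quantum_channel (N * M) (T i) \<and> quantum_channel (N * M) (T' i)"
    and \<rho>0: "density_op (N * M) \<rho>0" and \<tau>: "density_op (N * M) \<tau>" and p: "0 \<le> p" "p \<le> 1"
    and E: "povm (N * M) N E"
  shows "(\<Sum>x<N. Re (mtrace (state N M p \<tau> T T' \<rho>0 x k * E x))) \<le> 1 + 8 * (\<Sum>t<k. real (t + 1) * (1 - p) ^ t)"
proof -
  obtain KK KK' where
    kraus: "\<And>r. r < k \<Longrightarrow> kraus_rep (N * M) (T r) (KK r) \<and> kraus_isometry (N * M) (KK r)" and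
    kraus': "\<And>r. r < k \<Longrightarrow> kraus_rep (N * M) (T' r) (KK' r) \<and> kraus_isometry (N * M) (KK' r)"
    using quantum_channels_kraus[OF channels] by metis
  let ?R = "\<lambda>j t \<sigma>. \<Sum>x<N. Re (mtrace (query_rounds N M T T' x j t \<sigma> * E x))"
  have bound: "?R j t \<sigma> \<le> (2 * real t + 1)\<^sup>2" if "j + t \<le> k" "density_op (N * M) \<sigma>" for j t \<sigma>
    using noiseless_success_le[where KK = KK and KK' = KK'] kraus kraus' that E by simp
  have trace1: "A \<in> carrier_mat (N * M) (N * M) \<and> mtrace A = 1" if "density_op (N * M) A" for A
    using that unfolding density_op_def psd_def by simp
  have "Re (mtrace (state N M p \<tau> T T' \<rho>0 x k * E x)) =
      (1 - p) ^ k * Re (mtrace (query_rounds N M T T' x 0 k \<rho>0 * E x)) +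
      (\<Sum>t<k. p * (1 - p) ^ t * Re (mtrace (query_rounds N M T T' x (k - 1 - t) (t + 1) \<tau> * E x)))"
    if "x < N" for x
  proof -
    have "E x \<in> carrier_mat (N * M) (N * M)" using E that unfolding povm_def psd_def by simp
    thus ?thesis using noise_decomposition[OF channels, of \<rho>0 \<tau> k "\<lambda>A. mtrace (A * E x)" p x]
      trace1[OF \<rho>0] trace1[OF \<tau>] by (simp add: lin_functional_trace_mult Re_sum)
  qed
  hence "(\<Sum>x<N. Re (mtrace (state N M p \<tau> T T' \<rho>0 x k * E x))) =
      (1 - p) ^ k * ?R 0 k \<rho>0 + (\<Sum>t<k. p * (1 - p) ^ t * ?R (k - 1 - t) (t + 1) \<tau>)"
    by (simp add: sum.distrib sum_distrib_left sum.swap[of _ "{..<N}"])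
  also have "\<dots> \<le> (1 - p) ^ k * (2 * real k + 1)\<^sup>2 + (\<Sum>t<k. p * (1 - p) ^ t * (2 * real (t + 1) + 1)\<^sup>2)"
    using p \<rho>0 \<tau> by (intro add_mono mult_left_mono sum_mono bound) auto
  finally show ?thesis unfolding noise_weighted_sum_closed_form .
qed

lemma geometric_sum_mult:
  fixes p :: real
  shows "p * (\<Sum>t<k. (1 - p) ^ t) = 1 - (1 - p) ^ k"
  by (induction k) (auto simp: algebra_simps)

lemma weighted_geometric_sum_mult:
  fixes p :: real
  shows "p\<^sup>2 * (\<Sum>t<k. real (t + 1) * (1 - p) ^ t) = 1 - real (k + 1) * (1 - p) ^ k + real k * (1 - p) ^ (k + 1)"
  by (induction k) (auto simp: algebra_simps power2_eq_square)

lemma weighted_geometric_sum_le_inverse_square: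
  fixes p :: real assumes "0 < p" "p \<le> 1"
  shows "(\<Sum>t<k. real (t + 1) * (1 - p) ^ t) \<le> 1 / p\<^sup>2"
proof -
  have "real (k + 1) * (1 - p) ^ k - real k * (1 - p) ^ (k + 1) = (1 - p) ^ k * (real k * p + 1)"
    by (simp add: algebra_simps)
  also have "\<dots> \<ge> 0" using assms by simp
  finally have "p\<^sup>2 * (\<Sum>t<k. real (t + 1) * (1 - p) ^ t) \<le> 1"
    unfolding weighted_geometric_sum_mult by linarith
  thus ?thesis using assms by (simp add: field_simps)
qed

lemma weighted_geometric_sum_le_divide:
  fixes p :: real assumes "0 < p" "p \<le> 1"
  shows "(\<Sum>t<k. real (t + 1) * (1 - p) ^ t) \<le> real k / p"
proof -
  have "(\<Sum>t<k. real (t + 1) * (1 - p) ^ t) \<le> (\<Sum>t<k. real k * (1 - p) ^ t)"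
    using assms by (intro sum_mono mult_right_mono) auto
  also have "\<dots> = real k * (\<Sum>t<k. (1 - p) ^ t)" by (simp add: sum_distrib_left)
  also have "\<dots> \<le> real k * (1 / p)"
  proof (intro mult_left_mono)
    have "p * (\<Sum>t<k. (1 - p) ^ t) \<le> 1"
      unfolding geometric_sum_mult using assms by simp
    thus "(\<Sum>t<k. (1 - p) ^ t) \<le> 1 / p" using assms by (simp add: field_simps)
  qed simp
  finally show ?thesis by simp
qed

theorem theorem1:
  fixes N M k :: nat and p :: real and \<rho>0 \<tau> :: "complex mat"
    and T T' :: "nat \<Rightarrow> complex mat \<Rightarrow> complex mat" and E :: "nat \<Rightarrow> complex mat"
  assumes "N \<ge> 1" and "M \<ge> 1" and "k \<ge> 1"
    and "density_op (N * M) \<rho>0" and "density_op (N * M) \<tau>"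
    and "0 \<le> p" and "p \<le> 1"
    and "\<forall>i<k. quantum_channel (N * M) (T i) \<and> quantum_channel (N * M) (T' i)"
    and "povm (N * M) N E"
  defines "ps \<equiv> (\<Sum>x<N. (1 / of_nat N) * mtrace (state N M p \<tau> T T' \<rho>0 x k * E x))"
  shows "0 < p \<longrightarrow>
           Re ps \<le> 1 / real N + 8 / (real N * p\<^sup>2) \<and>
           Re ps \<le> 8 * (real k + 1) / (real N * p)"
proof
  assume p: "0 < p"
  let ?B = "1 + 8 * (\<Sum>t<k. real (t + 1) * (1 - p) ^ t)"
  have N: "0 < real N" using \<open>N \<ge> 1\<close> by simp
  have "Re ps = (\<Sum>x<N. Re (mtrace (state N M p \<tau> T T' \<rho>0 x k * E x))) / real N"
    unfolding ps_def by (simp add: Re_sum sum_divide_distrib)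
  also have "\<dots> \<le> ?B / real N"
    using noisy_success_le assms N by (intro divide_right_mono) auto
  finally have ps: "Re ps \<le> ?B / real N" .
  have "?B \<le> 1 + 8 / p\<^sup>2" "?B \<le> 8 * (real k + 1) / p"
    using weighted_geometric_sum_le_inverse_square[OF p assms(7), of k]
      weighted_geometric_sum_le_divide[OF p assms(7), of k] p assms(7)
    by (simp_all add: field_simps)
  hence "?B / real N \<le> (1 + 8 / p\<^sup>2) / real N" "?B / real N \<le> 8 * (real k + 1) / p / real N"
    using N by (meson divide_right_mono less_imp_le)+
  thus "Re ps \<le> 1 / real N + 8 / (real N * p\<^sup>2) \<and> Re ps \<le> 8 * (real k + 1) / (real N * p)"
    using ps by (simp add: add_divide_distrib mult.commute)
qed

end
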